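(* Assume the setting below and suppose there are constants $C,a>0$ with $|\psi(x)|\le Ce^{-a|x|}$ for all $x\in\mathbb R$. Then for every $\lambda\in\mathbb C\setminus\sigma_{\mathrm{ess}}(\mathcal L)$ the Birman–Schwinger operator $\mathcal K(\lambda)$ is Hilbert–Schmidt on $L^2(\mathbb R,\mathbb C^4)$, and its matrix-valued kernel is $$\mathbf K(x,y;\lambda)=\begin{cases}-\mathbf R_r(x)\mathbf Q(\lambda)e^{\mathbf A_\infty(\lambda)(x-y)}\mathbf Q(\lambda)\mathbf R_\ell(y),& x\ge y,\\ \mathbf R_r(x)(\mathbf I-\mathbf Q(\lambda))e^{\mathbf A_\infty(\lambda)(x-y)}(\mathbf I-\mathbf Q(\lambda))\mathbf R_\ell(y),& x<y.\end{cases}$$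
   Context: Setting. Fix real parameters $D,\beta,\delta,\alpha,\epsilon,\gamma,\mu,\nu$ with $\beta\ge0$, $(D,\beta)\neq(0,0)$. Let $\mathbf B=\begin{bmatrix}\beta&-D/2\\ D/2&\beta\end{bmatrix}$, $\mathbf N_0=\begin{bmatrix}\delta&-\alpha\\ \alpha&\delta\end{bmatrix}$, $\mathbf N_1=\begin{bmatrix}\epsilon&-\gamma\\ \gamma&\epsilon\end{bmatrix}$, $\mathbf N_2=\begin{bmatrix}\mu&-\nu\\ \nu&\mu\end{bmatrix}$. Let $\psi:\mathbb R\to\mathbb C$ be a stationary pulse of the cubic–quintic complex Ginzburg–Landau equation $i\Psi_t+\frac D2\Psi_{xx}+\gamma|\Psi|^2\Psi+\nu|\Psi|^4\Psi=i\delta\Psi+i\epsilon|\Psi|^2\Psi+i\beta\Psi_{xx}+i\mu|\Psi|^4\Psi$ ($\Psi=e^{-i\alpha t}\psi(x)$ is a solution), $\boldsymbol\psi=[\operatorname{Re}\psi\ \operatorname{Im}\psi]^T$, $|\boldsymbol\psi|=\|\boldsymbol\psi(x)\|_2$. Let $\mathbf M(x)=\mathbf N_1|\boldsymbol\psi|^2+\mathbf N_2|\boldsymbol\psi|^4+(2\mathbf N_1+4\mathbf N_2|\boldsymbol\psi|^2)\boldsymbol\psi\boldsymbol\psi^T$ and $\mathcal L=\mathbf B\partial_x^2+\mathbf N_0+\mathbf M(x)$ on $H^2(\mathbb R,\mathbb C^2)$; $\sigma_{\mathrm{ess}}(\mathcal L)=\{(\delta\pm i\alpha)-s^2(\beta\pm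 iD/2):s\in\mathbb R\}$. For $\lambda\notin\sigma_{\mathrm{ess}}(\mathcal L)$: $\mathbf A_\infty(\lambda)=\begin{bmatrix}\mathbf 0&\mathbf I\\ \mathbf B^{-1}(\lambda\mathbf I-\mathbf N_0)&\mathbf 0\end{bmatrix}\in\mathbb C^{4\times4}$ (no purely imaginary eigenvalues), $\mathbf Q(\lambda)$ the spectral projection onto its stable subspace. With a polar decomposition $\mathbf M=\mathbf V|\mathbf M|$, $|\mathbf M|=(\mathbf M^*\mathbf M)^{1/2}$, let $\mathbf R_\ell(x)=\begin{bmatrix}\mathbf 0&\mathbf 0\\ -\mathbf B^{-1}\mathbf V(x)|\mathbf M(x)|^{1/2}&\mathbf 0\end{bmatrix}$, $\mathbf R_r(x)=\begin{bmatrix}|\mathbf M(x)|^{1/2}&\mathbf 0\\ \mathbf 0&\mathbf 0\end{bmatrix}$. The Birman–Schwinger operator is $\mathcal K(\lambda)=\mathbf R_r\mathcal G_A(\lambda)\mathbf R_\ell$, where $\mathcal G_A(\lambda)=(-\partial_x+\mathbf A_\infty(\lambda))^{-1}$ on $L^2(\mathbb R,\mathbb C^4)$, the integral operator with kernel $\mathbf G_A(x-y)$, $\mathbf G_A(x)=-e^{\mathbf A_\infty x}\mathbf Q$ ($x\ge0$), $e^{\mathbf A_\infty x}(\mathbf I-\mathbf Q)$ ($x<0$). *)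

theory Defs
  imports "HOL-Analysis.Analysis"
begin

type_synonym cmat2 = "complex^2^2"
type_synonym cvec4 = "complex^(2+2)"
type_synonym cmat4 = "complex^(2+2)^(2+2)"

definition mat2 :: "complex \<Rightarrow> complex \<Rightarrow> complex \<Rightarrow> complex \<Rightarrow> cmat2" where
  "mat2 a b c d = vector [vector [a, b], vector [c, d]]"

definition block4 :: "cmat2 \<Rightarrow> cmat2 \<Rightarrow> cmat2 \<Rightarrow> cmat2 \<Rightarrow> cmat4" where
  "block4 A B C D = (\<chi> i j. case i of
      Inl p \<Rightarrow> (case j of Inl q \<Rightarrow> A $ p $ q | Inr q \<Rightarrow> B $ p $ q)
    | Inr p \<Rightarrow> (case j of Inl q \<Rightarrow> C $ p $ q | Inr q \<Rightarrow> D $ p $ q))"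

definition mat_adj :: "complex^'n^'n \<Rightarrow> complex^'n^'n" where
  "mat_adj A = (\<chi> i j. cnj (A $ j $ i))"

definition psd :: "complex^'n^'n \<Rightarrow> bool" where
  "psd A \<longleftrightarrow> mat_adj A = A \<and>
     (\<forall>x. Im (\<Sum>i\<in>UNIV. cnj (x $ i) * (A *v x) $ i) = 0 \<and>
          Re (\<Sum>i\<in>UNIV. cnj (x $ i) * (A *v x) $ i) \<ge> 0)"

definition psd_sqrt :: "complex^'n^'n \<Rightarrow> complex^'n^'n" where
  "psd_sqrt A = (THE S. psd S \<and> S ** S = A)"

definition mabs :: "complex^'n^'n \<Rightarrow> complex^'n^'n" where
  "mabs M = psd_sqrt (mat_adj M ** M)"

definition matpow :: "complex^'n^'n \<Rightarrow> nat \<Rightarrow> complex^'n^'n" where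
  "matpow A k = (((**) A) ^^ k) (mat 1)"

definition mexp :: "complex^'n^'n \<Rightarrow> complex^'n^'n" where
  "mexp A = (\<chi> i j. (\<Sum>k. (matpow A k) $ i $ j / of_nat (fact k)))"

definition gen_eigenspace :: "complex^'n^'n \<Rightarrow> complex \<Rightarrow> (complex^'n) set" where
  "gen_eigenspace A mu = {v. \<exists>k. matpow (A - mat mu) k *v v = 0}"

definition stable_proj :: "complex^'n^'n \<Rightarrow> complex^'n^'n" where
  "stable_proj A = (THE P. P ** P = P \<and>
      (\<forall>mu v. Re mu < 0 \<longrightarrow> v \<in> gen_eigenspace A mu \<longrightarrow> P *v v = v) \<and>
      (\<forall>mu v. Re mu > 0 \<longrightarrow> v \<in> gen_eigenspace A mu \<longrightarrow> P *v v = 0))"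

definition Bm :: "real \<Rightarrow> real \<Rightarrow> cmat2" where
  "Bm D \<beta> = mat2 \<beta> (- D/2) (D/2) \<beta>"

definition N0 :: "real \<Rightarrow> real \<Rightarrow> cmat2" where
  "N0 \<delta> \<alpha> = mat2 \<delta> (- \<alpha>) \<alpha> \<delta>"

definition N1 :: "real \<Rightarrow> real \<Rightarrow> cmat2" where
  "N1 \<epsilon> \<gamma> = mat2 \<epsilon> (- \<gamma>) \<gamma> \<epsilon>"

definition N2 :: "real \<Rightarrow> real \<Rightarrow> cmat2" where
  "N2 \<mu> \<nu> = mat2 \<mu> (- \<nu>) \<nu> \<mu>"

definition sigma_ess :: "real \<Rightarrow> real \<Rightarrow> real \<Rightarrow> real \<Rightarrow> complex set" where
  "sigma_ess D \<beta> \<delta> \<alpha> =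
     {(\<delta> + \<i>*\<alpha>) - (s^2) * (\<beta> + \<i>*(D/2)) | s::real. True} \<union>
     {(\<delta> - \<i>*\<alpha>) - (s^2) * (\<beta> - \<i>*(D/2)) | s::real. True}"

definition Mpot :: "real \<Rightarrow> real \<Rightarrow> real \<Rightarrow> real \<Rightarrow> (real \<Rightarrow> complex) \<Rightarrow> real \<Rightarrow> cmat2" where
  "Mpot \<epsilon> \<gamma> \<mu> \<nu> \<psi> x =
     (let r = cmod (\<psi> x); u = Re (\<psi> x); w = Im (\<psi> x);
          P = mat2 (u*u) (u*w) (w*u) (w*w)
      in mat2 (r^2) 0 0 (r^2) ** N1 \<epsilon> \<gamma> + mat2 (r^4) 0 0 (r^4) ** N2 \<mu> \<nu>
         + (mat2 2 0 0 2 ** N1 \<epsilon> \<gamma> + mat2 (4*r^2) 0 0 (4*r^2) ** N2 \<mu> \<nu>) ** P)"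

definition A_inf :: "real \<Rightarrow> real \<Rightarrow> real \<Rightarrow> real \<Rightarrow> complex \<Rightarrow> cmat4" where
  "A_inf D \<beta> \<delta> \<alpha> lam =
     block4 0 (mat 1) (matrix_inv (Bm D \<beta>) ** (mat lam - N0 \<delta> \<alpha>)) 0"

definition Qproj :: "real \<Rightarrow> real \<Rightarrow> real \<Rightarrow> real \<Rightarrow> complex \<Rightarrow> cmat4" where
  "Qproj D \<beta> \<delta> \<alpha> lam = stable_proj (A_inf D \<beta> \<delta> \<alpha> lam)"

text \<open>R_l and R_r built from the polar decomposition M = V |M|.\<close>
definition R_l :: "real \<Rightarrow> real \<Rightarrow> real \<Rightarrow> real \<Rightarrow> real \<Rightarrow> real \<Rightarrow> (real \<Rightarrow> complex)
     \<Rightarrow> (real \<Rightarrow> cmat2) \<Rightarrow> real \<Rightarrow> cmat4" where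
  "R_l D \<beta> \<epsilon> \<gamma> \<mu> \<nu> \<psi> V x =
     block4 0 0 (- (matrix_inv (Bm D \<beta>) ** V x ** psd_sqrt (mabs (Mpot \<epsilon> \<gamma> \<mu> \<nu> \<psi> x)))) 0"

definition R_r :: "real \<Rightarrow> real \<Rightarrow> real \<Rightarrow> real \<Rightarrow> (real \<Rightarrow> complex) \<Rightarrow> real \<Rightarrow> cmat4" where
  "R_r \<epsilon> \<gamma> \<mu> \<nu> \<psi> x = block4 (psd_sqrt (mabs (Mpot \<epsilon> \<gamma> \<mu> \<nu> \<psi> x))) 0 0 0"

text \<open>Kernel of G_A(lambda) = (-d/dx + A_inf(lambda))^{-1}.\<close>
definition G_A :: "real \<Rightarrow> real \<Rightarrow> real \<Rightarrow> real \<Rightarrow> complex \<Rightarrow> real \<Rightarrow> cmat4" where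
  "G_A D \<beta> \<delta> \<alpha> lam x =
     (if x \<ge> 0 then - (mexp (x *\<^sub>R A_inf D \<beta> \<delta> \<alpha> lam) ** Qproj D \<beta> \<delta> \<alpha> lam)
      else mexp (x *\<^sub>R A_inf D \<beta> \<delta> \<alpha> lam) ** (mat 1 - Qproj D \<beta> \<delta> \<alpha> lam))"

definition BS_kernel :: "real \<Rightarrow> real \<Rightarrow> real \<Rightarrow> real \<Rightarrow> real \<Rightarrow> real \<Rightarrow> real \<Rightarrow> real
     \<Rightarrow> (real \<Rightarrow> complex) \<Rightarrow> (real \<Rightarrow> cmat2) \<Rightarrow> complex \<Rightarrow> real \<Rightarrow> real \<Rightarrow> cmat4" where
  "BS_kernel D \<beta> \<delta> \<alpha> \<epsilon> \<gamma> \<mu> \<nu> \<psi> V lam x y =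
     R_r \<epsilon> \<gamma> \<mu> \<nu> \<psi> x ** G_A D \<beta> \<delta> \<alpha> lam (x - y) ** R_l D \<beta> \<epsilon> \<gamma> \<mu> \<nu> \<psi> V y"

definition BS_op :: "real \<Rightarrow> real \<Rightarrow> real \<Rightarrow> real \<Rightarrow> real \<Rightarrow> real \<Rightarrow> real \<Rightarrow> real
     \<Rightarrow> (real \<Rightarrow> complex) \<Rightarrow> (real \<Rightarrow> cmat2) \<Rightarrow> complex \<Rightarrow> (real \<Rightarrow> cvec4) \<Rightarrow> real \<Rightarrow> cvec4" where
  "BS_op D \<beta> \<delta> \<alpha> \<epsilon> \<gamma> \<mu> \<nu> \<psi> V lam f x =
     (\<integral>y. BS_kernel D \<beta> \<delta> \<alpha> \<epsilon> \<gamma> \<mu> \<nu> \<psi> V lam x y *v f y \<partial>lborel)"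

text \<open>An integral operator on L^2(R, C^4) with kernel k is Hilbert-Schmidt iff k is in
  L^2(R x R) (Frobenius norm; the norm on complex^n^m is the Frobenius norm).\<close>
definition HS_kernel :: "(real \<Rightarrow> real \<Rightarrow> cmat4) \<Rightarrow> bool" where
  "HS_kernel k \<longleftrightarrow> (\<lambda>(x, y). k x y) \<in> borel_measurable (lborel \<Otimes>\<^sub>M lborel) \<and>
     integrable (lborel \<Otimes>\<^sub>M lborel) (\<lambda>(x, y). (norm (k x y))^2)"

definition HS_integral_operator ::
    "((real \<Rightarrow> cvec4) \<Rightarrow> real \<Rightarrow> cvec4) \<Rightarrow> (real \<Rightarrow> real \<Rightarrow> cmat4) \<Rightarrow> bool" where
  "HS_integral_operator T k \<longleftrightarrow> HS_kernel k \<and>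
     (\<forall>f. f \<in> borel_measurable lborel \<longrightarrow> integrable lborel (\<lambda>y. (norm (f y))^2) \<longrightarrow>
        (AE x in lborel. T f x = (\<integral>y. k x y *v f y \<partial>lborel)))"

end

theory Submission
  imports Defs
begin

text \<open>The asymptotic matrix \<open>A_inf \<lambda>\<close> is diagonalizable with eigenvalues \<open>\<plusminus>m\<^sub>1, \<plusminus>m\<^sub>2\<close>,
  where \<open>m\<^sub>j\<^sup>2 = (\<lambda> - n\<^sub>j) / b\<^sub>j\<close>; \<open>\<lambda> \<notin> \<sigma>\<^sub>e\<^sub>s\<^sub>s\<close> says exactly that these quotients avoid
  \<open>(-\<infinity>, 0]\<close>, so no eigenvalue is purely imaginary. In the eigenbasis the stable projection \<open>Q\<close> and
  \<open>e\<^sup>t\<^sup>A\<close> are both diagonal. Hence they commute, which turns \<open>R_r G_A R_l\<close> into the stated kernel, and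
  the Green kernel \<open>G_A\<close> is bounded (exponential dichotomy). The weights satisfy
  \<open>\<parallel>R_r x\<parallel>\<^sup>2, \<parallel>R_l x\<parallel>\<^sup>2 \<le> c \<parallel>M x\<parallel> \<le> c' |\<psi> x|\<^sup>2\<close>, so \<open>\<parallel>K x y\<parallel>\<^sup>2 \<le> c'' |\<psi> x|\<^sup>2 |\<psi> y|\<^sup>2\<close>, which is integrable on
  \<open>\<real>\<^sup>2\<close> because \<open>\<psi>\<close> decays exponentially. As \<open>psd_sqrt\<close> is defined by a description, square roots of
  positive semidefinite 2x2 matrices are computed by an explicit formula; it provides both the norm
  bound and the measurability of \<open>|M|\<^sup>1\<^sup>/\<^sup>2\<close>.\<close>

section \<open>Matrix algebra\<close>

lemma matrix_diff_ldistrib: "(A::'a::ring_1^'n^'m) ** (B - C) = A ** B - A ** C"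
  by (simp add: vec_eq_iff matrix_matrix_mult_def sum_subtractf right_diff_distrib)

lemma matrix_diff_rdistrib: "((A::'a::ring_1^'n^'m) - B) ** C = A ** C - B ** C"
  by (simp add: vec_eq_iff matrix_matrix_mult_def sum_subtractf left_diff_distrib)

lemma matrix_mul_uminus_left: "(- (A::'a::ring_1^'n^'m)) ** B = - (A ** B)"
  by (simp add: vec_eq_iff matrix_matrix_mult_def sum_negf)

lemma matrix_mul_uminus_right: "(A::'a::ring_1^'n^'m) ** (- B) = - (A ** B)"
  by (simp add: vec_eq_iff matrix_matrix_mult_def sum_negf)

lemma idempotent_commuting_sandwich:
  fixes P X :: "'a::ring_1^'n^'n"
  assumes idem: "P ** P = P" and comm: "P ** X = X ** P"
  shows "P ** X ** P = X ** P"
    and "(mat 1 - P) ** X ** (mat 1 - P) = X ** (mat 1 - P)"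
proof -
  show "P ** X ** P = X ** P"
    by (simp add: comm idem flip: matrix_mul_assoc)
  have "(mat 1 - P) ** (mat 1 - P) = mat 1 - P"
    by (simp add: matrix_diff_ldistrib matrix_diff_rdistrib idem)
  moreover have "(mat 1 - P) ** X = X ** (mat 1 - P)"
    by (simp add: matrix_diff_ldistrib matrix_diff_rdistrib comm)
  ultimately show "(mat 1 - P) ** X ** (mat 1 - P) = X ** (mat 1 - P)"
    by (metis matrix_mul_assoc)
qed

lemma mat_adj_mult: "mat_adj ((A::complex^'n^'n) ** B) = mat_adj B ** mat_adj A"
  by (simp add: vec_eq_iff mat_adj_def matrix_matrix_mult_def mult.commute)

lemma mat_adj_mat_adj [simp]: "mat_adj (mat_adj A) = (A::complex^'n^'n)"
  by (simp add: vec_eq_iff mat_adj_def)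

lemma norm_vec_power2: "(norm (x::'a::real_normed_vector^'n))^2 = (\<Sum>i\<in>UNIV. (norm (x$i))^2)"
  by (simp add: norm_vec_def L2_set_def sum_nonneg)

lemma norm_matrix_entry_le: "norm (M $ i $ j) \<le> norm (M::'a::real_normed_vector^'n^'m)"
  by (rule order_trans[OF Finite_Cartesian_Product.norm_nth_le Finite_Cartesian_Product.norm_nth_le])

lemma norm_matrix_mult_le:
  fixes A :: "'a::real_normed_div_algebra^'n^'m" and B :: "'a^'k^'n"
  shows "norm (A ** B) \<le> norm A * norm B"
proof -
  define col :: "'k \<Rightarrow> 'a^'n" where "col j = (\<chi> l. B $ l $ j)" for j
  have entry: "norm ((A ** B) $ i $ j) \<le> norm (A $ i) * norm (col j)" for i j
  proof -
    have "norm ((A ** B) $ i $ j) \<le> (\<Sum>l\<in>UNIV. norm (A $ i $ l) * norm (B $ l $ j))"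
      unfolding matrix_matrix_mult_def by (simp add: norm_mult order_trans[OF norm_sum])
    also have "\<dots> \<le> L2_set (\<lambda>l. norm (A $ i $ l)) UNIV * L2_set (\<lambda>l. norm (B $ l $ j)) UNIV"
      using L2_set_mult_ineq[of "\<lambda>l. norm (A $ i $ l)" "\<lambda>l. norm (B $ l $ j)"] by simp
    finally show ?thesis by (simp add: norm_vec_def col_def)
  qed
  have "(norm (A ** B))^2 = (\<Sum>i\<in>UNIV. \<Sum>j\<in>UNIV. (norm ((A ** B) $ i $ j))^2)"
    by (simp add: norm_vec_power2)
  also have "\<dots> \<le> (\<Sum>i\<in>UNIV. \<Sum>j\<in>UNIV. (norm (A $ i))^2 * (norm (col j))^2)"
    by (intro sum_mono) (metis entry norm_ge_zero power_mono power_mult_distrib)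
  also have "\<dots> = (\<Sum>i\<in>UNIV. (norm (A $ i))^2) * (\<Sum>j\<in>UNIV. (norm (col j))^2)"
    by (simp add: sum_product)
  also have "(\<Sum>j\<in>UNIV. (norm (col j))^2) = (norm B)^2"
    by (simp add: norm_vec_power2 col_def) (rule sum.swap)
  finally have "(norm (A ** B))^2 \<le> (norm A * norm B)^2"
    by (simp add: norm_vec_power2 power_mult_distrib)
  then show ?thesis
    by (rule power2_le_imp_le) simp
qed

lemma norm_matrix_mult3_le: "norm (A ** B ** C) \<le> norm A * norm B * norm C"
  for A :: "'a::real_normed_div_algebra^'n^'m" and B :: "'a^'k^'n" and C :: "'a^'l^'k"
  by (meson norm_matrix_mult_le norm_ge_zero mult_right_mono order_trans)

lemma norm_mat_adj: "norm (mat_adj (M::complex^'n^'n)) = norm M"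
proof -
  have "(norm (mat_adj M))^2 = (norm M)^2"
    by (simp add: norm_vec_power2 mat_adj_def) (rule sum.swap)
  then show ?thesis
    by simp
qed

lemma norm_unitary:
  fixes V :: "complex^'n^'n"
  assumes "mat_adj V ** V = mat 1"
  shows "(norm V)^2 = CARD('n)"
proof -
  have column: "(\<Sum>i\<in>UNIV. (cmod (V $ i $ j))^2) = 1" for j
  proof -
    have "of_real (\<Sum>i\<in>UNIV. (cmod (V $ i $ j))^2) = (mat_adj V ** V) $ j $ j"
      unfolding of_real_sum complex_norm_square
      by (simp add: matrix_matrix_mult_def mat_adj_def mult.commute)
    also have "\<dots> = 1"
      using assms by (simp add: mat_def)
    finally show ?thesis
      by (simp only: of_real_eq_1_iff)
  qed
  have "(norm V)^2 = (\<Sum>j\<in>UNIV. \<Sum>i\<in>UNIV. (cmod (V $ i $ j))^2)"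
    unfolding norm_vec_power2 by (rule sum.swap)
  then show ?thesis
    by (simp add: column)
qed

lemma norm_hermitian_power2_le:
  fixes S :: "complex^'n^'n"
  assumes "mat_adj S = S"
  shows "(norm S)^2 \<le> CARD('n) * norm (S ** S)"
proof -
  have adj: "S $ j $ i = cnj (S $ i $ j)" for i j
    using arg_cong[OF assms, of "\<lambda>M. cnj (M $ i $ j)"] by (simp add: mat_adj_def)
  have diag: "(S ** S) $ i $ i = of_real (\<Sum>j\<in>UNIV. (cmod (S $ i $ j))^2)" for i
    unfolding of_real_sum complex_norm_square matrix_matrix_mult_def
    by (simp add: adj[of i])
  have "(norm S)^2 = (\<Sum>i\<in>UNIV. Re ((S ** S) $ i $ i))"
    by (simp add: norm_vec_power2 diag)
  also have "\<dots> \<le> (\<Sum>i\<in>(UNIV::'n set). norm (S ** S))"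
    by (intro sum_mono order_trans[OF complex_Re_le_cmod norm_matrix_entry_le])
  finally show ?thesis
    by simp
qed

lemma mat2_nth [simp]:
  "mat2 a b c d $ 1 $ 1 = a" "mat2 a b c d $ 1 $ 2 = b"
  "mat2 a b c d $ 2 $ 1 = c" "mat2 a b c d $ 2 $ 2 = d"
  by (simp_all add: mat2_def)

lemma mat2_eta: "A = mat2 (A$1$1) (A$1$2) (A$2$1) (A$2$2)"
  by (simp add: vec_eq_iff forall_2)

lemma mat2_eq_iff: "mat2 a b c d = mat2 a' b' c' d' \<longleftrightarrow> a = a' \<and> b = b' \<and> c = c' \<and> d = d'"
  by (auto dest: arg_cong[where f="\<lambda>M. (M$1$1, M$1$2, M$2$1, M$2$2)"])

lemma mat2_mult:
  "mat2 a b c d ** mat2 a' b' c' d' = mat2 (a*a'+b*c') (a*b'+b*d') (c*a'+d*c') (c*b'+d*d')"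
  by (simp add: vec_eq_iff forall_2 matrix_matrix_mult_def sum_2)

lemma mat2_add: "mat2 a b c d + mat2 a' b' c' d' = mat2 (a+a') (b+b') (c+c') (d+d')"
  by (simp add: vec_eq_iff forall_2)

lemma mat2_diff: "mat2 a b c d - mat2 a' b' c' d' = mat2 (a-a') (b-b') (c-c') (d-d')"
  by (simp add: vec_eq_iff forall_2)

lemma mat2_uminus: "- mat2 a b c d = mat2 (-a) (-b) (-c) (-d)"
  by (simp add: vec_eq_iff forall_2)

lemma mat_eq_mat2: "(mat x :: complex^2^2) = mat2 x 0 0 x"
  by (simp add: vec_eq_iff forall_2 mat_def)

lemma zero_eq_mat2: "(0 :: complex^2^2) = mat2 0 0 0 0"
  by (simp add: vec_eq_iff forall_2)

lemma mat_adj_mat2: "mat_adj (mat2 a b c d) = mat2 (cnj a) (cnj c) (cnj b) (cnj d)"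
  by (simp add: vec_eq_iff forall_2 mat_adj_def)

lemma mat2_mult_vec: "mat2 a b c d *v x = vector [a * x$1 + b * x$2, c * x$1 + d * x$2]"
  by (simp add: vec_eq_iff forall_2 matrix_vector_mult_def sum_2)

lemma mat2_scaleR: "r *\<^sub>R mat2 a b c d = mat2 (r *\<^sub>R a) (r *\<^sub>R b) (r *\<^sub>R c) (r *\<^sub>R d)"
  by (simp add: vec_eq_iff forall_2)

lemma mat2_scalar_mult: "mat2 (of_real s) 0 0 (of_real s) ** A = s *\<^sub>R A"
  by (simp add: vec_eq_iff forall_2 matrix_matrix_mult_def sum_2 scaleR_conv_of_real[where 'a=complex])

lemmas mat2_simps = mat2_mult mat2_add mat2_diff mat2_uminus mat_eq_mat2 zero_eq_mat2 mat_adj_mat2 mat2_eq_iff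

lemma norm_mat2: "(norm (mat2 a b c d))^2 = (cmod a)^2 + (cmod b)^2 + (cmod c)^2 + (cmod d)^2"
  by (simp add: norm_vec_power2 sum_2)

lemma sum_UNIV_sum:
  "(\<Sum>i\<in>(UNIV::('a::finite + 'b::finite) set). f i) = (\<Sum>i\<in>UNIV. f (Inl i)) + (\<Sum>i\<in>UNIV. f (Inr i))"
  by (subst UNIV_Plus_UNIV[symmetric], subst sum.Plus) (auto simp: o_def)

lemma block4_nth [simp]:
  "block4 A B C D $ Inl p $ Inl q = A $ p $ q"
  "block4 A B C D $ Inl p $ Inr q = B $ p $ q"
  "block4 A B C D $ Inr p $ Inl q = C $ p $ q"
  "block4 A B C D $ Inr p $ Inr q = D $ p $ q"
  by (simp_all add: block4_def)

lemma block4_eq_iff: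
  "block4 A B C D = block4 A' B' C' D' \<longleftrightarrow> A = A' \<and> B = B' \<and> C = C' \<and> D = D'"
  by (auto simp: vec_eq_iff split_sum_all)

lemma block4_mult: "block4 A B C D ** block4 A' B' C' D' =
   block4 (A ** A' + B ** C') (A ** B' + B ** D') (C ** A' + D ** C') (C ** B' + D ** D')"
  by (simp add: vec_eq_iff split_sum_all matrix_matrix_mult_def sum_UNIV_sum)

lemma block4_add: "block4 A B C D + block4 A' B' C' D' = block4 (A+A') (B+B') (C+C') (D+D')"
  by (simp add: vec_eq_iff split_sum_all)

lemma block4_uminus: "- block4 A B C D = block4 (-A) (-B) (-C) (-D)"
  by (simp add: vec_eq_iff split_sum_all)

lemma mat_eq_block4: "(mat x :: cmat4) = block4 (mat x) 0 0 (mat x)"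
  by (simp add: vec_eq_iff split_sum_all mat_def)

lemmas block4_simps = block4_mult block4_add block4_uminus block4_eq_iff

lemma norm_block4:
  "(norm (block4 A B C D))^2 = (norm A)^2 + (norm B)^2 + (norm C)^2 + (norm D)^2"
  by (simp add: norm_vec_power2 sum_UNIV_sum sum.distrib)

lemma matrix_inv_unique:
  fixes A X :: "complex^'n^'n"
  assumes "A ** X = mat 1" "X ** A = mat 1"
  shows "matrix_inv A = X"
proof -
  have "\<exists>A'. A ** A' = mat 1 \<and> A' ** A = mat 1"
    using assms by blast
  then have "A ** matrix_inv A = mat 1 \<and> matrix_inv A ** A = mat 1"
    unfolding matrix_inv_def by (rule someI_ex)
  then have "matrix_inv A = matrix_inv A ** (A ** X)"
    by (simp add: assms)
  also have "\<dots> = X"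
    using \<open>A ** matrix_inv A = mat 1 \<and> matrix_inv A ** A = mat 1\<close> by (simp add: matrix_mul_assoc)
  finally show ?thesis .
qed

section \<open>Diagonalizable matrices\<close>

definition diag_mat :: "('n::finite \<Rightarrow> complex) \<Rightarrow> complex^'n^'n" where
  "diag_mat d = (\<chi> i j. if i = j then d i else 0)"

lemma diag_mat_mult: "diag_mat a ** diag_mat b = diag_mat (\<lambda>i. a i * b i)"
proof -
  have "(if i = k then a i else 0) * (if k = j then b k else 0)
      = (if k = i then if i = j then a i * b i else 0 else 0)" for i j k
    by auto
  then show ?thesis
    by (simp add: vec_eq_iff matrix_matrix_mult_def diag_mat_def)
qed

lemma diag_mat_mult_vec_nth: "(diag_mat d *v x) $ j = d j * x $ j"
  by (simp add: matrix_vector_mult_def diag_mat_def if_distrib if_distribR cong: if_cong)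

lemma similar_diag_mat_nth: "(E ** diag_mat a ** Einv) $ i $ j = (\<Sum>l\<in>UNIV. E$i$l * a l * Einv$l$j)"
  by (simp add: matrix_matrix_mult_def diag_mat_def if_distrib if_distribR cong: if_cong)

lemma norm_diag_mat: "(norm (diag_mat d))^2 = (\<Sum>i\<in>UNIV. (cmod (d i))^2)"
  by (simp add: norm_vec_power2 diag_mat_def if_distrib if_distribR cong: if_cong)

lemma matrix_mult_diag_mat_nth: "(A ** diag_mat d) $ i $ j = A $ i $ j * d j"
proof -
  have "A $ i $ k * (if k = j then d k else 0) = (if k = j then A $ i $ j * d j else 0)" for k
    by simp
  then show ?thesis
    by (simp add: matrix_matrix_mult_def diag_mat_def)
qed

lemma mat_mult_vec: "mat c *v x = c *s (x::'a::comm_semiring_1^'n)"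
proof -
  have "(if i = j then c else 0) * x $ j = (if j = i then c * x $ i else 0)" for i j
    by simp
  then show ?thesis
    by (simp add: vec_eq_iff matrix_vector_mult_def mat_def)
qed

lemma matrix_mult_axis_nth: "((M::complex^'n^'m) *v axis j 1) $ i = M $ i $ j"
  by (simp add: matrix_vector_mult_def axis_def if_distrib if_distribR cong: if_cong)

locale diagonalizing =
  fixes E Einv :: "complex^'n::finite^'n"
  assumes inv_left: "Einv ** E = mat 1" and inv_right: "E ** Einv = mat 1"
begin

lemma similar_mult:
  "(E ** diag_mat a ** Einv) ** (E ** diag_mat b ** Einv) = E ** diag_mat (\<lambda>i. a i * b i) ** Einv"
proof -
  have "(E ** diag_mat a ** Einv) ** (E ** diag_mat b ** Einv)
      = E ** diag_mat a ** (Einv ** E) ** diag_mat b ** Einv"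
    by (simp add: matrix_mul_assoc)
  also have "\<dots> = E ** diag_mat (\<lambda>i. a i * b i) ** Einv"
    by (simp add: inv_left diag_mat_mult flip: matrix_mul_assoc)
  finally show ?thesis .
qed

lemma similar_diff: "E ** diag_mat a ** Einv - E ** diag_mat b ** Einv = E ** diag_mat (\<lambda>i. a i - b i) ** Einv"
  by (simp add: vec_eq_iff similar_diag_mat_nth algebra_simps sum_subtractf)

lemma similar_uminus: "- (E ** diag_mat a ** Einv) = E ** diag_mat (\<lambda>i. - a i) ** Einv"
  by (simp add: vec_eq_iff similar_diag_mat_nth sum_negf)

lemma similar_scaleR: "r *\<^sub>R (E ** diag_mat a ** Einv) = E ** diag_mat (\<lambda>i. r *\<^sub>R a i) ** Einv"
  by (simp add: vec_eq_iff similar_diag_mat_nth scaleR_sum_right)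

lemma mat_eq_similar: "mat c = E ** diag_mat (\<lambda>_. c) ** Einv"
proof -
  have "(E ** diag_mat (\<lambda>_. c) ** Einv) $ i $ j = c * (E ** Einv) $ i $ j" for i j
  proof -
    have "(E ** diag_mat (\<lambda>_. c) ** Einv) $ i $ j = (\<Sum>l\<in>UNIV. E$i$l * c * Einv$l$j)"
      by (rule similar_diag_mat_nth)
    also have "\<dots> = c * (E ** Einv) $ i $ j"
      by (simp add: matrix_matrix_mult_def sum_distrib_left mult_ac)
    finally show ?thesis .
  qed
  then show ?thesis
    by (simp add: vec_eq_iff inv_right mat_def)
qed

lemma matpow_similar: "matpow (E ** diag_mat a ** Einv) k = E ** diag_mat (\<lambda>i. a i ^ k) ** Einv"
proof (induction k)
  case 0
  show ?case
    using mat_eq_similar[of 1] by (simp add: matpow_def)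
next
  case (Suc k)
  then show ?case
    by (simp add: matpow_def similar_mult)
qed

lemma mexp_similar: "mexp (E ** diag_mat a ** Einv) = E ** diag_mat (\<lambda>i. exp (a i)) ** Einv"
proof -
  have "(\<lambda>k. matpow (E ** diag_mat a ** Einv) k $ i $ j / of_nat (fact k))
          sums (E ** diag_mat (\<lambda>i. exp (a i)) ** Einv) $ i $ j" for i j
  proof -
    have "(\<lambda>k. \<Sum>l\<in>UNIV. E$i$l * Einv$l$j * (a l ^ k /\<^sub>R fact k)) sums (\<Sum>l\<in>UNIV. E$i$l * Einv$l$j * exp (a l))"
      by (intro sums_sum sums_mult exp_converges)
    then show ?thesis
      by (simp add: matpow_similar similar_diag_mat_nth sum_divide_distrib scaleR_conv_of_real
          divide_inverse mult_ac sum_distrib_left)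
  qed
  then show ?thesis
    by (simp add: mexp_def vec_eq_iff sums_iff)
qed

lemma gen_eigenspace_similar:
  assumes "v \<in> gen_eigenspace (E ** diag_mat mu ** Einv) m"
  shows "\<exists>k. \<forall>j. (mu j - m) ^ k * (Einv *v v) $ j = 0"
proof -
  from assms obtain k where k: "matpow (E ** diag_mat mu ** Einv - mat m) k *v v = 0"
    unfolding gen_eigenspace_def by blast
  have "E ** diag_mat mu ** Einv - mat m = E ** diag_mat (\<lambda>i. mu i - m) ** Einv"
    by (subst mat_eq_similar[of m]) (rule similar_diff)
  with k have "Einv *v ((E ** diag_mat (\<lambda>i. (mu i - m) ^ k) ** Einv) *v v) = 0"
    by (simp add: matpow_similar)
  then have "diag_mat (\<lambda>i. (mu i - m) ^ k) *v (Einv *v v) = 0"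
    by (simp add: matrix_vector_mul_assoc matrix_mul_assoc inv_left)
  then show ?thesis
    by (auto simp: vec_eq_iff diag_mat_mult_vec_nth)
qed

end

definition is_stable_projection :: "complex^'n^'n \<Rightarrow> complex^'n^'n \<Rightarrow> bool" where
  "is_stable_projection X P \<longleftrightarrow> P ** P = P \<and>
      (\<forall>mu v. Re mu < 0 \<longrightarrow> v \<in> gen_eigenspace X mu \<longrightarrow> P *v v = v) \<and>
      (\<forall>mu v. Re mu > 0 \<longrightarrow> v \<in> gen_eigenspace X mu \<longrightarrow> P *v v = 0)"

lemma stable_proj_eq_The: "stable_proj X = (THE P. is_stable_projection X P)"
  by (simp add: stable_proj_def is_stable_projection_def)

definition stable_indicator :: "('n \<Rightarrow> complex) \<Rightarrow> 'n \<Rightarrow> complex" where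
  "stable_indicator mu j = (if Re (mu j) < 0 then 1 else 0)"

definition green_kernel :: "complex^'n::finite^'n \<Rightarrow> real \<Rightarrow> complex^'n^'n" where
  "green_kernel X t = (if 0 \<le> t then - (mexp (t *\<^sub>R X) ** stable_proj X)
                       else mexp (t *\<^sub>R X) ** (mat 1 - stable_proj X))"

definition hyperbolic_diagonalizable :: "complex^'n::finite^'n \<Rightarrow> bool" where
  "hyperbolic_diagonalizable X \<longleftrightarrow>
     (\<exists>E Einv mu. diagonalizing E Einv \<and> (\<forall>j. Re (mu j) \<noteq> 0) \<and> X = E ** diag_mat mu ** Einv)"

context diagonalizing
begin

lemma is_stable_projection_similar:
  "is_stable_projection (E ** diag_mat mu ** Einv) (E ** diag_mat (stable_indicator mu) ** Einv)"
  unfolding is_stable_projection_def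
proof (intro conjI allI impI)
  let ?s = "stable_indicator mu"
  have P_apply: "(E ** diag_mat ?s ** Einv) *v v = E *v (diag_mat ?s *v (Einv *v v))" for v
    by (simp add: matrix_vector_mul_assoc matrix_mul_assoc)
  have "(\<lambda>i. ?s i * ?s i) = ?s"
    by (auto simp: stable_indicator_def)
  then show "(E ** diag_mat ?s ** Einv) ** (E ** diag_mat ?s ** Einv) = E ** diag_mat ?s ** Einv"
    by (simp add: similar_mult)
  fix m v
  assume "v \<in> gen_eigenspace (E ** diag_mat mu ** Einv) m"
  then obtain k where k: "\<And>j. (mu j - m) ^ k * (Einv *v v) $ j = 0"
    using gen_eigenspace_similar by blast
  show "(E ** diag_mat ?s ** Einv) *v v = v" if "Re m < 0"
  proof -
    have "?s j * (Einv *v v) $ j = (Einv *v v) $ j" for j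
      using k[of j] that by (cases "Re (mu j) < 0") (auto simp: stable_indicator_def)
    then have "diag_mat ?s *v (Einv *v v) = Einv *v v"
      by (simp add: vec_eq_iff diag_mat_mult_vec_nth)
    then show ?thesis
      by (simp add: P_apply matrix_vector_mul_assoc inv_right)
  qed
  show "(E ** diag_mat ?s ** Einv) *v v = 0" if "Re m > 0"
  proof -
    have "?s j * (Einv *v v) $ j = 0" for j
      using k[of j] that by (cases "Re (mu j) < 0") (auto simp: stable_indicator_def)
    then have "diag_mat ?s *v (Einv *v v) = 0"
      by (simp add: vec_eq_iff diag_mat_mult_vec_nth)
    then show ?thesis
      by (simp add: P_apply)
  qed
qed

lemma column_in_gen_eigenspace: "E *v axis j 1 \<in> gen_eigenspace (E ** diag_mat mu ** Einv) (mu j)"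
proof -
  let ?X = "E ** diag_mat mu ** Einv" and ?u = "E *v axis j 1"
  have "?X *v ?u = (?X ** E) *v axis j 1"
    by (simp add: matrix_vector_mul_assoc)
  also have "\<dots> = E *v (diag_mat mu *v axis j 1)"
    by (simp add: inv_left matrix_vector_mul_assoc flip: matrix_mul_assoc)
  also have "diag_mat mu *v axis j 1 = mu j *s axis j 1"
    by (simp add: vec_eq_iff diag_mat_mult_vec_nth axis_def)
  finally have "?X *v ?u = mu j *s ?u"
    by (simp add: vector_scalar_commute)
  then have "matpow (?X - mat (mu j)) 1 *v ?u = 0"
    by (simp add: matpow_def matrix_vector_mult_diff_rdistrib mat_mult_vec)
  then show ?thesis
    unfolding gen_eigenspace_def by blast
qed

text \<open>A stable projection is pinned down on the eigenbasis formed by the columns of \<open>E\<close>,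
  since none of the eigenvalues is purely imaginary.\<close>
lemma is_stable_projection_unique:
  assumes hyperbolic: "\<And>j. Re (mu j) \<noteq> 0"
    and P: "is_stable_projection (E ** diag_mat mu ** Einv) P"
  shows "P = E ** diag_mat (stable_indicator mu) ** Einv"
proof -
  let ?X = "E ** diag_mat mu ** Einv" and ?s = "stable_indicator mu"
  have stable: "\<And>m v. Re m < 0 \<Longrightarrow> v \<in> gen_eigenspace ?X m \<Longrightarrow> P *v v = v"
    and unstable: "\<And>m v. Re m > 0 \<Longrightarrow> v \<in> gen_eigenspace ?X m \<Longrightarrow> P *v v = 0"
    using P unfolding is_stable_projection_def by blast+
  have column: "P *v (E *v axis j 1) = ?s j *s (E *v axis j 1)" for j
  proof (cases "Re (mu j) < 0")
    case True
    then show ?thesis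
      using stable[OF True column_in_gen_eigenspace] by (simp add: stable_indicator_def)
  next
    case False
    then have "Re (mu j) > 0"
      using hyperbolic[of j] by linarith
    then show ?thesis
      using unstable[OF _ column_in_gen_eigenspace] False by (simp add: stable_indicator_def)
  qed
  have "(P ** E) $ i $ j = (E ** diag_mat ?s) $ i $ j" for i j
  proof -
    have "(P ** E) $ i $ j = (P *v (E *v axis j 1)) $ i"
      by (simp add: matrix_vector_mul_assoc matrix_mult_axis_nth)
    then show ?thesis
      by (simp add: column matrix_mult_axis_nth matrix_mult_diag_mat_nth mult.commute)
  qed
  then have "P ** E = E ** diag_mat ?s"
    by (simp add: vec_eq_iff)
  then have "P ** (E ** Einv) = E ** diag_mat ?s ** Einv"
    by (simp add: matrix_mul_assoc)
  then show ?thesis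
    by (simp add: inv_right)
qed

lemma stable_proj_similar:
  assumes "\<And>j. Re (mu j) \<noteq> 0"
  shows "stable_proj (E ** diag_mat mu ** Einv) = E ** diag_mat (stable_indicator mu) ** Einv"
  unfolding stable_proj_eq_The
proof (rule the_equality)
  show "is_stable_projection (E ** diag_mat mu ** Einv) (E ** diag_mat (stable_indicator mu) ** Einv)"
    by (rule is_stable_projection_similar)
qed (rule is_stable_projection_unique[OF assms])

lemma green_kernel_similar:
  assumes "\<And>j. Re (mu j) \<noteq> 0"
  shows "green_kernel (E ** diag_mat mu ** Einv) t = E ** diag_mat (\<lambda>j.
           if 0 \<le> t then - (exp (t *\<^sub>R mu j) * stable_indicator mu j)
           else exp (t *\<^sub>R mu j) * (1 - stable_indicator mu j)) ** Einv"
  by (simp add: green_kernel_def stable_proj_similar[OF assms] similar_scaleR mexp_similar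
      similar_mult similar_uminus similar_diff mat_eq_similar[of 1])

end

lemma stable_proj_mexp:
  assumes "hyperbolic_diagonalizable X"
  shows "stable_proj X ** stable_proj X = stable_proj X"
    and "stable_proj X ** mexp (t *\<^sub>R X) = mexp (t *\<^sub>R X) ** stable_proj X"
proof -
  obtain E Einv mu where "diagonalizing E Einv" and hyp: "\<And>j. Re (mu j) \<noteq> 0"
    and X: "X = E ** diag_mat mu ** Einv"
    using assms unfolding hyperbolic_diagonalizable_def by blast
  interpret diagonalizing E Einv by fact
  have "(\<lambda>i. stable_indicator mu i * stable_indicator mu i) = stable_indicator mu"
    by (auto simp: stable_indicator_def)
  then show "stable_proj X ** stable_proj X = stable_proj X"
    by (simp add: X stable_proj_similar[OF hyp] similar_mult)
  show "stable_proj X ** mexp (t *\<^sub>R X) = mexp (t *\<^sub>R X) ** stable_proj X"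
    by (simp add: X stable_proj_similar[OF hyp] similar_scaleR mexp_similar similar_mult mult.commute)
qed

text \<open>Exponential dichotomy: the Green kernel keeps the modes with \<open>Re mu < 0\<close> for \<open>t \<ge> 0\<close>
  and those with \<open>Re mu > 0\<close> for \<open>t < 0\<close>, so all its eigenvalues lie in the closed unit disc.\<close>
lemma green_kernel_bounded:
  fixes X :: "complex^'n::finite^'n"
  assumes "hyperbolic_diagonalizable X"
  obtains K where "\<And>t. norm (green_kernel X t) \<le> K"
proof -
  obtain E Einv mu where "diagonalizing E Einv" and hyp: "\<And>j. Re (mu j) \<noteq> 0"
    and X: "X = E ** diag_mat mu ** Einv"
    using assms unfolding hyperbolic_diagonalizable_def by blast
  interpret diagonalizing E Einv by fact
  define g where "g t j = (if 0 \<le> t then - (exp (t *\<^sub>R mu j) * stable_indicator mu j)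
           else exp (t *\<^sub>R mu j) * (1 - stable_indicator mu j))" for t j
  have "cmod (g t j) \<le> 1" for t j
  proof (cases "0 \<le> t \<longleftrightarrow> Re (mu j) < 0")
    case True
    then have "t * Re (mu j) \<le> 0"
      by (cases "0 \<le> t") (auto simp: mult_nonneg_nonpos mult_nonpos_nonneg)
    with True show ?thesis
      by (auto simp: g_def stable_indicator_def norm_mult)
  next
    case False
    then show ?thesis
      by (auto simp: g_def stable_indicator_def)
  qed
  then have "(norm (diag_mat (g t)))^2 \<le> (sqrt CARD('n))^2" for t
    unfolding norm_diag_mat using sum_mono[of UNIV "\<lambda>j. (cmod (g t j))^2" "\<lambda>_. 1"]
    by (simp add: power_le_one)
  then have "norm (diag_mat (g t)) \<le> sqrt CARD('n)" for t
    by (rule power2_le_imp_le) simp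
  then have "norm (E ** diag_mat (g t) ** Einv) \<le> norm E * sqrt CARD('n) * norm Einv" for t
    by (intro order_trans[OF norm_matrix_mult3_le] mult_right_mono mult_left_mono norm_ge_zero)
  then have "norm (green_kernel X t) \<le> norm E * sqrt CARD('n) * norm Einv" for t
    unfolding X green_kernel_similar[OF hyp] g_def .
  then show ?thesis
    by (rule that)
qed

section \<open>Measurable matrix-valued functions\<close>

lemma borel_measurable_vec_iff:
  fixes f :: "'a \<Rightarrow> 'b::euclidean_space^'n"
  shows "f \<in> borel_measurable M \<longleftrightarrow> (\<forall>i. (\<lambda>x. f x $ i) \<in> borel_measurable M)"
proof
  assume f: "f \<in> borel_measurable M"
  have "(\<lambda>v::'b^'n. v $ i) \<in> borel_measurable borel" for i
    by (intro borel_measurable_continuous_onI linear_continuous_on bounded_linear_vec_nth)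
  with f show "\<forall>i. (\<lambda>x. f x $ i) \<in> borel_measurable M"
    using measurable_compose by blast
next
  assume components: "\<forall>i. (\<lambda>x. f x $ i) \<in> borel_measurable M"
  show "f \<in> borel_measurable M"
  proof (subst borel_measurable_euclidean_space, intro ballI)
    fix b :: "'b^'n"
    assume "b \<in> Basis"
    then obtain i u where b: "b = axis i u" and "u \<in> Basis"
      by (auto simp: Basis_vec_def)
    have "(\<lambda>x. f x $ i \<bullet> u) \<in> borel_measurable M"
      using components by (intro borel_measurable_inner) auto
    then show "(\<lambda>x. f x \<bullet> b) \<in> borel_measurable M"
      by (simp add: b inner_axis)
  qed
qed

lemma borel_measurable_matrix_iff:
  fixes f :: "'a \<Rightarrow> complex^'n^'m"
  shows "f \<in> borel_measurable M \<longleftrightarrow> (\<forall>i j. (\<lambda>x. f x $ i $ j) \<in> borel_measurable M)"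
  by (simp add: borel_measurable_vec_iff)

lemma continuous_on_matrix_mult [continuous_intros]:
  fixes f :: "'a::topological_space \<Rightarrow> complex^'n^'m" and g :: "'a \<Rightarrow> complex^'k^'n"
  shows "continuous_on S f \<Longrightarrow> continuous_on S g \<Longrightarrow> continuous_on S (\<lambda>x. f x ** g x)"
  unfolding matrix_matrix_mult_def by (intro continuous_intros)

lemma borel_measurable_matrix_mult [measurable (raw)]:
  fixes f :: "'a \<Rightarrow> complex^'n^'m" and g :: "'a \<Rightarrow> complex^'k^'n"
  assumes "f \<in> borel_measurable M" "g \<in> borel_measurable M"
  shows "(\<lambda>x. f x ** g x) \<in> borel_measurable M"
  using assms by (rule borel_measurable_continuous_Pair) (intro continuous_intros)

lemma borel_measurable_mat_adj [measurable (raw)]: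
  fixes f :: "'a \<Rightarrow> complex^'n^'n"
  assumes "f \<in> borel_measurable M"
  shows "(\<lambda>x. mat_adj (f x)) \<in> borel_measurable M"
proof -
  have "continuous_on UNIV (mat_adj :: complex^'n^'n \<Rightarrow> _)"
    unfolding mat_adj_def by (intro continuous_intros)
  then show ?thesis
    using assms by (rule borel_measurable_continuous_on)
qed

lemma mat2_eq_vec_lambda:
  "mat2 a b c d = (\<chi> i j. if i = 1 then if j = 1 then a else b else if j = 1 then c else d)"
  by (simp add: vec_eq_iff forall_2)

lemma continuous_on_mat2 [continuous_intros]:
  assumes "continuous_on S a" "continuous_on S b" "continuous_on S c" "continuous_on S d"
  shows "continuous_on S (\<lambda>x. mat2 (a x) (b x) (c x) (d x))"
  unfolding mat2_eq_vec_lambda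
proof (intro continuous_on_vec_lambda)
  fix i j :: 2
  show "continuous_on S (\<lambda>x. if i = 1 then if j = 1 then a x else b x else if j = 1 then c x else d x)"
    using assms by (cases "i = 1"; cases "j = 1") simp_all
qed

lemma borel_measurable_block4 [measurable (raw)]:
  fixes A B C D :: "'a \<Rightarrow> cmat2"
  assumes "A \<in> borel_measurable M" "B \<in> borel_measurable M"
    and "C \<in> borel_measurable M" "D \<in> borel_measurable M"
  shows "(\<lambda>x. block4 (A x) (B x) (C x) (D x)) \<in> borel_measurable M"
  using assms by (simp add: borel_measurable_matrix_iff split_sum_all)

lemma borel_measurable_green_kernel:
  assumes "hyperbolic_diagonalizable X"
  shows "green_kernel X \<in> borel_measurable borel"
proof -
  obtain E Einv mu where "diagonalizing E Einv" and hyp: "\<And>j. Re (mu j) \<noteq> 0"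
    and X: "X = E ** diag_mat mu ** Einv"
    using assms unfolding hyperbolic_diagonalizable_def by blast
  interpret diagonalizing E Einv by fact
  have "(\<lambda>t::real. diag_mat (\<lambda>j. if 0 \<le> t then - (exp (t *\<^sub>R mu j) * stable_indicator mu j)
           else exp (t *\<^sub>R mu j) * (1 - stable_indicator mu j))) \<in> borel_measurable borel"
    unfolding borel_measurable_matrix_iff diag_mat_def by measurable
  then show ?thesis
    unfolding X green_kernel_similar[OF hyp, abs_def] by measurable
qed

section \<open>The asymptotic matrix and the Green kernel\<close>

text \<open>Every matrix \<open>[[a, -b], [b, a]]\<close> (such as \<open>Bm\<close>, \<open>N0\<close>) has the eigenvectors \<open>(1, -i)\<close> and
  \<open>(1, i)\<close> with eigenvalues \<open>a + i b\<close> and \<open>a - i b\<close>.\<close>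
definition rot_basis :: cmat2 where
  "rot_basis = mat2 1 1 (-\<i>) \<i>"

definition rot_basis_inv :: cmat2 where
  "rot_basis_inv = mat2 (1/2) (\<i>/2) (1/2) (-\<i>/2)"

lemma rotation_similar_diag:
  "mat2 a (-b) b a = rot_basis ** mat2 (a + \<i>*b) 0 0 (a - \<i>*b) ** rot_basis_inv"
  by (simp add: rot_basis_def rot_basis_inv_def mat2_simps field_simps)

lemma matrix_inv_similar_diag:
  assumes "b1 \<noteq> 0" "b2 \<noteq> 0"
  shows "matrix_inv (rot_basis ** mat2 b1 0 0 b2 ** rot_basis_inv)
           = rot_basis ** mat2 (1/b1) 0 0 (1/b2) ** rot_basis_inv"
  using assms by (intro matrix_inv_unique) (simp_all add: rot_basis_def rot_basis_inv_def mat2_simps field_simps)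

lemma matrix_inv_mult_similar_diag:
  assumes "b1 \<noteq> 0" "b2 \<noteq> 0"
  shows "matrix_inv (rot_basis ** mat2 b1 0 0 b2 ** rot_basis_inv) ** (mat lam - rot_basis ** mat2 n1 0 0 n2 ** rot_basis_inv)
     = rot_basis ** mat2 ((lam - n1) / b1) 0 0 ((lam - n2) / b2) ** rot_basis_inv"
  using assms by (subst matrix_inv_similar_diag[OF assms]) (simp add: rot_basis_def rot_basis_inv_def mat2_simps field_simps)

lemma Bm_similar_diag: "Bm D \<beta> = rot_basis ** mat2 (\<beta> + \<i> * (D/2)) 0 0 (\<beta> - \<i> * (D/2)) ** rot_basis_inv"
  unfolding Bm_def using rotation_similar_diag[of "of_real \<beta>" "of_real (D/2)"] by simp

lemma N0_similar_diag: "N0 \<delta> \<alpha> = rot_basis ** mat2 (\<delta> + \<i> * \<alpha>) 0 0 (\<delta> - \<i> * \<alpha>) ** rot_basis_inv"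
  unfolding N0_def using rotation_similar_diag[of "of_real \<delta>" "of_real \<alpha>"] by simp

text \<open>If \<open>W v = m\<^sup>2 v\<close>, then \<open>(v, m v)\<close> and \<open>(v, -m v)\<close> are eigenvectors of \<open>[[0, I], [W, 0]]\<close>
  with eigenvalues \<open>m\<close> and \<open>-m\<close>.\<close>
definition companion_eigvecs :: "complex \<Rightarrow> complex \<Rightarrow> cmat4" where
  "companion_eigvecs m1 m2 = block4 rot_basis rot_basis
     (rot_basis ** mat2 m1 0 0 m2) (- (rot_basis ** mat2 m1 0 0 m2))"

definition companion_eigvecs_inv :: "complex \<Rightarrow> complex \<Rightarrow> cmat4" where
  "companion_eigvecs_inv m1 m2 =
     (let H = mat2 (1/4) (\<i>/4) (1/4) (-\<i>/4)
      in block4 H (mat2 (1/m1) 0 0 (1/m2) ** H) H (- (mat2 (1/m1) 0 0 (1/m2) ** H)))"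

definition companion_eigvals :: "complex \<Rightarrow> complex \<Rightarrow> 2 + 2 \<Rightarrow> complex" where
  "companion_eigvals m1 m2 i = (case i of Inl p \<Rightarrow> if p = 1 then m1 else m2 | Inr p \<Rightarrow> if p = 1 then -m1 else -m2)"

lemma diag_mat_block4:
  "(diag_mat d :: cmat4) = block4 (mat2 (d (Inl 1)) 0 0 (d (Inl 2))) 0 0 (mat2 (d (Inr 1)) 0 0 (d (Inr 2)))"
  by (simp add: vec_eq_iff split_sum_all forall_2 diag_mat_def)

lemma diagonalizing_companion_eigvecs:
  assumes "m1 \<noteq> 0" "m2 \<noteq> 0"
  shows "diagonalizing (companion_eigvecs m1 m2) (companion_eigvecs_inv m1 m2)"
  using assms by unfold_locales
    (simp_all add: companion_eigvecs_def companion_eigvecs_inv_def rot_basis_def rot_basis_inv_def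
      Let_def block4_simps mat_eq_block4 mat2_simps field_simps)

lemma companion_similar_diag:
  assumes "m1 \<noteq> 0" "m2 \<noteq> 0"
  shows "block4 0 (mat 1) (rot_basis ** mat2 (m1^2) 0 0 (m2^2) ** rot_basis_inv) 0
           = companion_eigvecs m1 m2 ** diag_mat (companion_eigvals m1 m2) ** companion_eigvecs_inv m1 m2"
  using assms
  by (simp add: diag_mat_block4 companion_eigvals_def companion_eigvecs_def companion_eigvecs_inv_def
      rot_basis_def rot_basis_inv_def Let_def block4_simps mat_eq_block4 mat2_simps field_simps power2_eq_square)

lemma Re_csqrt_pos:
  assumes "\<And>s. w \<noteq> - ((complex_of_real s)^2)"
  shows "Re (csqrt w) > 0"
proof (rule ccontr)
  assume "\<not> Re (csqrt w) > 0"
  then have "csqrt w = \<i> * of_real (Im (csqrt w))"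
    using Re_csqrt[of w] by (simp add: complex_eq_iff)
  then have "w = (\<i> * of_real (Im (csqrt w)))^2"
    by (metis power2_csqrt)
  then have "w = - ((complex_of_real (Im (csqrt w)))^2)"
    by (simp add: power_mult_distrib)
  with assms show False
    by blast
qed

text \<open>\<open>\<lambda> - n - s\<^sup>2 b \<noteq> 0\<close> for all real \<open>s\<close> says that \<open>(\<lambda> - n) / b\<close> avoids the closed negative
  real axis, whose preimage under \<open>m \<mapsto> m\<^sup>2\<close> is the imaginary axis.\<close>
lemma Re_csqrt_quotient_pos:
  assumes "b \<noteq> 0" and "\<And>s. lam \<noteq> n - complex_of_real (s^2) * b"
  shows "Re (csqrt ((lam - n) / b)) > 0"
proof (rule Re_csqrt_pos)
  fix s :: real
  show "(lam - n) / b \<noteq> - ((complex_of_real s)^2)"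
    using assms(2)[of s] \<open>b \<noteq> 0\<close> by (auto simp: field_simps)
qed

lemma hyperbolic_diagonalizable_A_inf:
  assumes nondeg: "(D, \<beta>) \<noteq> (0, 0)" and lam_ness: "lam \<notin> sigma_ess D \<beta> \<delta> \<alpha>"
  shows "hyperbolic_diagonalizable (A_inf D \<beta> \<delta> \<alpha> lam)"
proof -
  define b1 where "b1 = complex_of_real \<beta> + \<i> * (D/2)"
  define b2 where "b2 = complex_of_real \<beta> - \<i> * (D/2)"
  define n1 where "n1 = complex_of_real \<delta> + \<i> * \<alpha>"
  define n2 where "n2 = complex_of_real \<delta> - \<i> * \<alpha>"
  define m1 where "m1 = csqrt ((lam - n1) / b1)"
  define m2 where "m2 = csqrt ((lam - n2) / b2)"
  have b1: "b1 \<noteq> 0" and b2: "b2 \<noteq> 0"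
    using nondeg by (auto simp: b1_def b2_def complex_eq_iff)
  have "lam \<noteq> n1 - of_real (s^2) * b1" "lam \<noteq> n2 - of_real (s^2) * b2" for s :: real
    using lam_ness unfolding sigma_ess_def b1_def b2_def n1_def n2_def by auto
  then have m: "Re m1 > 0" "Re m2 > 0"
    unfolding m1_def m2_def using b1 b2 by (blast intro: Re_csqrt_quotient_pos)+
  then have m_nz: "m1 \<noteq> 0" "m2 \<noteq> 0"
    by auto
  have "A_inf D \<beta> \<delta> \<alpha> lam = block4 0 (mat 1) (rot_basis ** mat2 (m1^2) 0 0 (m2^2) ** rot_basis_inv) 0"
    using matrix_inv_mult_similar_diag[OF b1 b2, of lam n1 n2]
    by (simp add: A_inf_def Bm_similar_diag N0_similar_diag m1_def m2_def b1_def b2_def n1_def n2_def)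
  also have "\<dots> = companion_eigvecs m1 m2 ** diag_mat (companion_eigvals m1 m2) ** companion_eigvecs_inv m1 m2"
    using m_nz by (rule companion_similar_diag)
  finally show ?thesis
    unfolding hyperbolic_diagonalizable_def
    using diagonalizing_companion_eigvecs[OF m_nz] m
    by (intro exI[of _ "companion_eigvecs m1 m2"] exI[of _ "companion_eigvecs_inv m1 m2"]
        exI[of _ "companion_eigvals m1 m2"]) (auto simp: companion_eigvals_def split: sum.split)
qed

lemma G_A_eq_green_kernel: "G_A D \<beta> \<delta> \<alpha> lam = green_kernel (A_inf D \<beta> \<delta> \<alpha> lam)"
  by (simp add: fun_eq_iff G_A_def green_kernel_def Qproj_def)

section \<open>Square roots of positive semidefinite 2x2 matrices\<close>

lemma quadratic_form_mat2:
  "(\<Sum>i\<in>UNIV. cnj (x$i) * (mat2 (of_real p) z (cnj z) (of_real q) *v x)$i) =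
     of_real (p * (cmod (x$1))^2 + q * (cmod (x$2))^2 + 2 * Re (cnj (x$1) * z * x$2))"
  unfolding cmod_power2 by (simp add: sum_2 mat2_mult_vec complex_eq_iff algebra_simps power2_eq_square)

lemma hermitian_mat2_eq:
  assumes "mat_adj A = A"
  shows "A = mat2 (of_real (Re (A$1$1))) (A$1$2) (cnj (A$1$2)) (of_real (Re (A$2$2)))"
proof -
  have adj: "A $ j $ i = cnj (A $ i $ j)" for i j
    using arg_cong[OF assms, of "\<lambda>M. cnj (M $ i $ j)"] by (simp add: mat_adj_def)
  have "Im (A$1$1) = 0" "Im (A$2$2) = 0"
    using adj[of 1 1] adj[of 2 2] by (simp_all add: complex_eq_iff)
  then show ?thesis
    by (subst mat2_eta) (simp add: mat2_eq_iff complex_eq_iff adj[of 1 2])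
qed

lemma psd_mat2_imp:
  assumes "psd (mat2 (of_real p) z (cnj z) (of_real q))"
  shows "p \<ge> 0" "q \<ge> 0" "(cmod z)^2 \<le> p * q"
proof -
  have F: "0 \<le> p * (cmod (x$1))^2 + q * (cmod (x$2))^2 + 2 * Re (cnj (x$1) * z * x$2)" for x :: "complex^2"
    using assms unfolding psd_def quadratic_form_mat2 by simp
  show p: "p \<ge> 0" and q: "q \<ge> 0"
    using F[of "vector [1, 0]"] F[of "vector [0, 1]"] by simp_all
  have zz: "cnj z * z = of_real ((cmod z)^2)"
    by (metis complex_norm_square mult.commute)
  have cm: "cmod z * cmod z = Re z * Re z + Im z * Im z"
    using cmod_power2[of z] by (simp add: power2_eq_square)
  have "0 \<le> p * (p * q - (cmod z)^2)" "0 \<le> q * (p * q - (cmod z)^2)"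
    "0 \<le> p + q * (cmod z)^2 - 2 * (cmod z)^2"
    using F[of "vector [- z, of_real p]"] F[of "vector [of_real q, - cnj z]"] F[of "vector [1, - cnj z]"]
    by (simp_all add: zz cm power2_eq_square algebra_simps)
  then show "(cmod z)^2 \<le> p * q"
    using p q by (cases "p > 0"; cases "q > 0") (auto simp: zero_le_mult_iff)
qed

lemma psd_mat2I:
  assumes pq: "p \<ge> 0" "q \<ge> 0" "(cmod z)^2 \<le> p * q"
  shows "psd (mat2 (of_real p) z (cnj z) (of_real q))"
  unfolding psd_def quadratic_form_mat2
proof (intro conjI allI)
  fix x :: "complex^2"
  let ?u = "cmod (x$1)" and ?v = "cmod (x$2)"
  have "cmod z \<le> sqrt p * sqrt q"
    using pq by (simp add: real_le_rsqrt real_sqrt_mult[symmetric])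
  then have "2 * cmod z * ?u * ?v \<le> 2 * (sqrt p * sqrt q) * ?u * ?v"
    by (simp add: mult_right_mono)
  also have "\<dots> \<le> p * ?u^2 + q * ?v^2"
  proof -
    have "0 \<le> (sqrt p * ?u - sqrt q * ?v)^2"
      by simp
    also have "\<dots> = p * ?u^2 + q * ?v^2 - 2 * (sqrt p * sqrt q) * ?u * ?v"
      using pq by (simp add: power2_diff algebra_simps)
    finally show ?thesis
      by linarith
  qed
  finally have "2 * cmod z * ?u * ?v \<le> p * ?u^2 + q * ?v^2" .
  moreover have "- Re (cnj (x$1) * z * x$2) \<le> cmod z * ?u * ?v"
  proof -
    have "cmod (cnj (x$1) * z * x$2) = cmod z * ?u * ?v"
      by (simp add: norm_mult)
    then show ?thesis
      using abs_Re_le_cmod[of "cnj (x$1) * z * x$2"] by linarith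
  qed
  ultimately show "0 \<le> Re (complex_of_real (p * ?u^2 + q * ?v^2 + 2 * Re (cnj (x$1) * z * x$2)))"
    by simp
qed (auto simp: mat_adj_mat2)

text \<open>For \<open>A \<ge> 0\<close>, \<open>\<surd>A = (A + \<surd>(det A) I) / \<surd>(tr A + 2 \<surd>(det A))\<close> by Cayley--Hamilton;
  at \<open>A = 0\<close> the division by zero returns the right value \<open>0\<close>.\<close>
definition sqrt2x2 :: "cmat2 \<Rightarrow> cmat2" where
  "sqrt2x2 A = (let a = Re (A$1$1); c = Re (A$2$2); d = sqrt (a * c - (cmod (A$1$2))^2)
                in (1 / sqrt (a + c + 2 * d)) *\<^sub>R (A + d *\<^sub>R mat 1))"

lemma sqrt2x2_mat2:
  assumes "d = sqrt (p * q - (cmod z)^2)"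
  shows "sqrt2x2 (mat2 (of_real p) z (cnj z) (of_real q))
       = (1 / sqrt (p + q + 2 * d)) *\<^sub>R mat2 (of_real (p + d)) z (cnj z) (of_real (q + d))"
  by (simp add: assms sqrt2x2_def Let_def mat_eq_mat2 mat2_add mat2_scaleR
      scaleR_conv_of_real[where 'a=complex])

lemma mat2_hermitian_shift_square:
  assumes "d^2 = p * q - (cmod z)^2"
  shows "mat2 (of_real (p + d)) z (cnj z) (of_real (q + d)) ** mat2 (of_real (p + d)) z (cnj z) (of_real (q + d))
       = (p + q + 2 * d) *\<^sub>R mat2 (of_real p) z (cnj z) (of_real q)"
proof -
  have "(cmod z)^2 = p * q - d^2"
    using assms by simp
  then have zz: "z * cnj z = of_real (p * q - d^2)" "cnj z * z = of_real (p * q - d^2)"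
    by (simp_all only: complex_norm_square[symmetric] mult.commute[of "cnj z"])
  show ?thesis
    by (simp add: mat2_mult mat2_scaleR mat2_eq_iff zz scaleR_conv_of_real[where 'a=complex]
        algebra_simps power2_eq_square)
qed

lemma matrix_mult_scaleR:
  fixes A :: "'a::real_algebra_1^'k^'m" and B :: "'a^'n^'k"
  shows "(r *\<^sub>R A) ** (s *\<^sub>R B) = (r * s) *\<^sub>R (A ** B)"
  by (simp add: vec_eq_iff matrix_matrix_mult_def scaleR_sum_right mult.commute[of s r])

lemma psd_sqrt2x2:
  assumes pq: "p \<ge> 0" "q \<ge> 0" "(cmod z)^2 \<le> p * q"
  shows "psd (sqrt2x2 (mat2 (of_real p) z (cnj z) (of_real q)))"
proof -
  define d where "d = sqrt (p * q - (cmod z)^2)"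
  define t where "t = sqrt (p + q + 2 * d)"
  have d: "d \<ge> 0" "d^2 = p * q - (cmod z)^2"
    using pq by (simp_all add: d_def)
  have "0 \<le> d * (d + p + q)"
    using pq d by simp
  then have "(cmod z)^2 \<le> (p + d) * (q + d)"
    using pq(3) by (simp add: algebra_simps)
  then have "(cmod (z / of_real t))^2 \<le> ((p + d) / t) * ((q + d) / t)"
    by (simp add: norm_divide power_divide power2_eq_square divide_right_mono)
  then have "psd (mat2 (of_real ((p + d) / t)) (z / of_real t) (cnj (z / of_real t)) (of_real ((q + d) / t)))"
    using pq d by (intro psd_mat2I) (simp_all add: t_def)
  moreover have "(1 / t) *\<^sub>R mat2 (of_real (p + d)) z (cnj z) (of_real (q + d))
      = mat2 (of_real ((p + d) / t)) (z / of_real t) (cnj (z / of_real t)) (of_real ((q + d) / t))"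
    by (simp add: mat2_scaleR mat2_eq_iff scaleR_conv_of_real[where 'a=complex] divide_inverse mult.commute)
  ultimately show ?thesis
    by (simp add: sqrt2x2_mat2[OF d_def] t_def)
qed

lemma sqrt2x2_square:
  assumes pq: "p \<ge> 0" "q \<ge> 0" "(cmod z)^2 \<le> p * q"
    and A: "A = mat2 (of_real p) z (cnj z) (of_real q)"
  shows "sqrt2x2 A ** sqrt2x2 A = A"
proof -
  define d where "d = sqrt (p * q - (cmod z)^2)"
  define t where "t = sqrt (p + q + 2 * d)"
  let ?M = "mat2 (of_real (p + d)) z (cnj z) (of_real (q + d))"
  have d: "d \<ge> 0" "d^2 = p * q - (cmod z)^2"
    using pq by (simp_all add: d_def)
  have t: "t^2 = p + q + 2 * d"
    using pq d by (simp add: t_def)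
  have S: "sqrt2x2 A = (1 / t) *\<^sub>R ?M"
    unfolding A t_def by (rule sqrt2x2_mat2[OF d_def])
  show ?thesis
  proof (cases "t = 0")
    case True
    then have "p = 0" "q = 0"
      using pq d t by auto
    with pq(3) have "A = 0"
      by (simp add: A zero_eq_mat2)
    moreover have "sqrt2x2 A = 0"
      by (simp add: S True)
    ultimately show ?thesis
      by simp
  next
    case False
    have "sqrt2x2 A ** sqrt2x2 A = (1 / t * (1 / t)) *\<^sub>R (?M ** ?M)"
      by (simp add: S matrix_mult_scaleR)
    also have "?M ** ?M = t^2 *\<^sub>R A"
      using mat2_hermitian_shift_square[OF d(2)] t A by simp
    finally show ?thesis
      using False by (simp add: power2_eq_square)
  qed
qed

lemma psd_square_eq_sqrt2x2:
  assumes "psd S"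
  shows "sqrt2x2 (S ** S) = S"
proof -
  define p where "p = Re (S$1$1)"
  define q where "q = Re (S$2$2)"
  define w where "w = S$1$2"
  have S: "S = mat2 (of_real p) w (cnj w) (of_real q)"
    using hermitian_mat2_eq assms unfolding psd_def p_def q_def w_def by blast
  have pq: "p \<ge> 0" "q \<ge> 0" "(cmod w)^2 \<le> p * q"
    using psd_mat2_imp assms S by metis+
  define k where "k = (cmod w)^2"
  have ww: "w * cnj w = of_real k" "cnj w * w = of_real k"
    unfolding k_def by (simp_all only: complex_norm_square[symmetric] mult.commute[of "cnj w"])
  have SS: "S ** S = mat2 (of_real (p*p + k)) (w * of_real (p + q)) (cnj (w * of_real (p + q))) (of_real (q*q + k))"
    unfolding S by (simp add: mat2_mult mat2_eq_iff ww algebra_simps)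
  have "(cmod (w * of_real (p + q)))^2 = k * (p + q)^2"
    using pq by (simp add: norm_mult k_def power_mult_distrib del: of_real_add)
  then have d: "sqrt ((p*p + k) * (q*q + k) - (cmod (w * of_real (p + q)))^2) = p*q - k"
    using pq by (intro real_sqrt_unique) (auto simp: k_def power2_eq_square algebra_simps)
  have t: "sqrt ((p*p + k) + (q*q + k) + 2 * (p*q - k)) = p + q"
    using pq by (intro real_sqrt_unique) (auto simp: power2_eq_square algebra_simps)
  show ?thesis
  proof (cases "p + q = 0")
    case True
    then have "p = 0" "q = 0"
      using pq by auto
    moreover have "w = 0"
      using pq(3) \<open>p = 0\<close> \<open>q = 0\<close> by simp
    ultimately show ?thesis
      by (simp add: S mat2_mult sqrt2x2_def Let_def zero_eq_mat2)
  next
    case False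
    then have "of_real (p + q) \<noteq> (0::complex)"
      by (metis of_real_eq_0_iff)
    with False show ?thesis
      unfolding SS sqrt2x2_mat2[OF refl] d t
      by (simp add: S mat2_scaleR mat2_eq_iff scaleR_conv_of_real[where 'a=complex] field_simps)
  qed
qed

lemma psd_mat_adj_mult: "psd (mat_adj M ** (M::complex^'n^'n))"
  unfolding psd_def
proof (intro conjI allI)
  show "mat_adj (mat_adj M ** M) = mat_adj M ** M"
    by (simp add: mat_adj_mult)
next
  fix x :: "complex^'n"
  define y where "y = M *v x"
  have mv: "(mat_adj M ** M) *v x = mat_adj M *v y"
    by (simp add: y_def matrix_vector_mul_assoc)
  have mv2: "(mat_adj M *v y) $ i = (\<Sum>k\<in>UNIV. cnj (M$k$i) * y$k)" for i
    by (simp add: matrix_vector_mult_def mat_adj_def)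
  have "(\<Sum>i\<in>UNIV. cnj (x$i) * ((mat_adj M ** M) *v x)$i)
      = (\<Sum>i\<in>UNIV. \<Sum>k\<in>UNIV. cnj (x$i) * cnj (M$k$i) * y$k)"
    unfolding mv mv2 by (simp add: sum_distrib_left mult_ac)
  also have "\<dots> = (\<Sum>k\<in>UNIV. \<Sum>i\<in>UNIV. cnj (x$i) * cnj (M$k$i) * y$k)"
    by (rule sum.swap)
  also have "\<dots> = (\<Sum>k\<in>UNIV. y$k * cnj (y$k))"
    by (simp add: y_def matrix_vector_mult_def sum_distrib_left sum_distrib_right mult_ac)
  also have "\<dots> = of_real (\<Sum>k\<in>UNIV. (cmod (y$k))^2)"
    unfolding of_real_sum complex_norm_square ..
  finally have form: "(\<Sum>i\<in>UNIV. cnj (x$i) * ((mat_adj M ** M) *v x)$i) = of_real (\<Sum>k\<in>UNIV. (cmod (y$k))^2)" .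
  show "Im (\<Sum>i\<in>UNIV. cnj (x$i) * ((mat_adj M ** M) *v x)$i) = 0"
    unfolding form by simp
  show "Re (\<Sum>i\<in>UNIV. cnj (x$i) * ((mat_adj M ** M) *v x)$i) \<ge> 0"
    unfolding form by (simp add: sum_nonneg)
qed

lemma psd_sqrt_2x2:
  assumes "psd (A::cmat2)"
  shows "psd_sqrt A = sqrt2x2 A" "psd (sqrt2x2 A)" "sqrt2x2 A ** sqrt2x2 A = A"
proof -
  have "A = mat2 (of_real (Re (A$1$1))) (A$1$2) (cnj (A$1$2)) (of_real (Re (A$2$2)))"
    using assms hermitian_mat2_eq unfolding psd_def by blast
  then show psd: "psd (sqrt2x2 A)" and square: "sqrt2x2 A ** sqrt2x2 A = A"
    using assms psd_mat2_imp psd_sqrt2x2 sqrt2x2_square by metis+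
  show "psd_sqrt A = sqrt2x2 A"
    unfolding psd_sqrt_def
  proof (rule the_equality)
    show "psd (sqrt2x2 A) \<and> sqrt2x2 A ** sqrt2x2 A = A"
      using psd square by blast
  next
    fix S
    assume "psd S \<and> S ** S = A"
    then show "S = sqrt2x2 A"
      using psd_square_eq_sqrt2x2 by metis
  qed
qed

lemma psd_sqrt_mabs_eq: "psd_sqrt (mabs M) = sqrt2x2 (sqrt2x2 (mat_adj M ** (M::cmat2)))"
proof -
  have "mabs M = sqrt2x2 (mat_adj M ** M)" "psd (mabs M)"
    using psd_sqrt_2x2[OF psd_mat_adj_mult[of M]] by (simp_all add: mabs_def)
  then show ?thesis
    using psd_sqrt_2x2(1) by metis
qed

lemma norm_psd_sqrt_2x2_le:
  assumes "psd (A::cmat2)"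
  shows "(norm (psd_sqrt A))^2 \<le> 2 * norm A"
  using norm_hermitian_power2_le[of "sqrt2x2 A"] psd_sqrt_2x2[OF assms]
  unfolding psd_def by simp

lemma norm_psd_sqrt_mabs_le: "(norm (psd_sqrt (mabs M)))^2 \<le> 2 * sqrt 2 * norm (M::cmat2)"
proof -
  have "(norm (mabs M))^2 \<le> 2 * norm (mat_adj M ** M)"
    unfolding mabs_def by (rule norm_psd_sqrt_2x2_le[OF psd_mat_adj_mult])
  also have "\<dots> \<le> 2 * (norm M)^2"
    using norm_matrix_mult_le[of "mat_adj M" M] by (simp add: norm_mat_adj power2_eq_square)
  also have "\<dots> = (sqrt 2 * norm M)^2"
    by (simp add: power_mult_distrib)
  finally have "norm (mabs M) \<le> sqrt 2 * norm M"
    by (rule power2_le_imp_le) simp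
  moreover have "psd (mabs M)"
    unfolding mabs_def using psd_sqrt_2x2 psd_mat_adj_mult by metis
  ultimately show ?thesis
    using norm_psd_sqrt_2x2_le[of "mabs M"] by simp
qed

lemma borel_measurable_sqrt2x2 [measurable (raw)]:
  assumes "f \<in> borel_measurable M"
  shows "(\<lambda>x. sqrt2x2 (f x)) \<in> borel_measurable M"
proof -
  have [measurable]: "(\<lambda>x. f x $ i $ j) \<in> borel_measurable M" for i j
    using assms by (simp add: borel_measurable_matrix_iff)
  have [measurable]: "(\<lambda>x. mat 1 :: cmat2) \<in> borel_measurable M"
    by simp
  show ?thesis
    unfolding sqrt2x2_def Let_def using assms by measurable
qed

lemma borel_measurable_psd_sqrt_mabs [measurable (raw)]:
  "f \<in> borel_measurable M \<Longrightarrow> (\<lambda>x. psd_sqrt (mabs (f x :: cmat2))) \<in> borel_measurable M"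
  unfolding psd_sqrt_mabs_eq by measurable

section \<open>The potential\<close>

lemma Mpot_eq:
  "Mpot \<epsilon> \<gamma> \<mu> \<nu> \<psi> x = (cmod (\<psi> x))^2 *\<^sub>R N1 \<epsilon> \<gamma> + (cmod (\<psi> x))^4 *\<^sub>R N2 \<mu> \<nu>
     + (2 *\<^sub>R N1 \<epsilon> \<gamma> + (4 * (cmod (\<psi> x))^2) *\<^sub>R N2 \<mu> \<nu>)
       ** mat2 (of_real (Re (\<psi> x) * Re (\<psi> x))) (of_real (Re (\<psi> x) * Im (\<psi> x)))
               (of_real (Im (\<psi> x) * Re (\<psi> x))) (of_real (Im (\<psi> x) * Im (\<psi> x)))"
  by (simp add: Mpot_def Let_def flip: mat2_scalar_mult)

lemma norm_Mpot_le:
  "norm (Mpot \<epsilon> \<gamma> \<mu> \<nu> \<psi> x)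
     \<le> (3 * norm (N1 \<epsilon> \<gamma>) + 5 * (cmod (\<psi> x))^2 * norm (N2 \<mu> \<nu>)) * (cmod (\<psi> x))^2"
proof -
  let ?r = "cmod (\<psi> x)" and ?u = "Re (\<psi> x)" and ?w = "Im (\<psi> x)"
  let ?P = "mat2 (of_real (?u * ?u)) (of_real (?u * ?w)) (of_real (?w * ?u)) (of_real (?w * ?w))"
  have "(norm ?P)^2 = (?u^2 + ?w^2)^2"
    unfolding norm_mat2 by (simp add: norm_mult power2_eq_square algebra_simps)
  then have P: "norm ?P = ?r^2"
    by (simp add: cmod_power2)
  have "norm (Mpot \<epsilon> \<gamma> \<mu> \<nu> \<psi> x)
      \<le> ?r^2 * norm (N1 \<epsilon> \<gamma>) + ?r^4 * norm (N2 \<mu> \<nu>)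
        + (2 * norm (N1 \<epsilon> \<gamma>) + 4 * ?r^2 * norm (N2 \<mu> \<nu>)) * norm ?P"
    unfolding Mpot_eq
    by (intro norm_triangle_le add_mono order_trans[OF norm_matrix_mult_le] mult_right_mono
        order_trans[OF norm_triangle_ineq]) simp_all
  also have "\<dots> = (3 * norm (N1 \<epsilon> \<gamma>) + 5 * ?r^2 * norm (N2 \<mu> \<nu>)) * ?r^2"
    unfolding P by (simp add: algebra_simps power2_eq_square power4_eq_xxxx)
  finally show ?thesis .
qed

lemma borel_measurable_Mpot:
  assumes "\<psi> \<in> borel_measurable M"
  shows "Mpot \<epsilon> \<gamma> \<mu> \<nu> \<psi> \<in> borel_measurable M"
proof -
  define F where "F z = Mpot \<epsilon> \<gamma> \<mu> \<nu> (\<lambda>_. z) 0" for z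
  have "continuous_on UNIV F"
    unfolding F_def Mpot_def Let_def by (intro continuous_intros)
  then have "(\<lambda>x. F (\<psi> x)) \<in> borel_measurable M"
    using assms by (rule borel_measurable_continuous_on)
  moreover have "(\<lambda>x. F (\<psi> x)) = Mpot \<epsilon> \<gamma> \<mu> \<nu> \<psi>"
    by (simp add: fun_eq_iff F_def Mpot_def)
  ultimately show ?thesis
    by simp
qed

lemma integrable_exp_neg_abs:
  assumes b: "b > 0"
  shows "integrable lborel (\<lambda>x::real. exp (- b * \<bar>x\<bar>))"
proof (rule integrableI_bounded)
  define g where "g x = (if x \<in> {0..} then exp (- b * x) else 0)" for x :: real
  have g_measurable [measurable]: "g \<in> borel_measurable borel"
    unfolding g_def by measurable
  have "((\<lambda>x::real. exp (- b * x)) has_integral exp (- b * 0) / b) {0..}"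
    by (rule has_integral_exp_minus_to_infinity[OF b])
  then have g_integral: "(g has_integral 1 / b) UNIV"
    unfolding g_def has_integral_restrict_UNIV by simp
  have right: "(\<integral>\<^sup>+x. ennreal (g x) \<partial>lborel) = ennreal (1 / b)"
    by (rule nn_integral_has_integral_lborel[OF g_measurable _ g_integral]) (simp add: g_def)
  have "(\<integral>\<^sup>+x. ennreal (g x) \<partial>lborel) = (\<integral>\<^sup>+x. ennreal (g (- x)) \<partial>lborel)"
    using nn_integral_real_affine[of "\<lambda>x. ennreal (g x)" "-1" 0] by simp
  then have left: "(\<integral>\<^sup>+x. ennreal (g (- x)) \<partial>lborel) = ennreal (1 / b)"
    using right by simp
  have "(\<integral>\<^sup>+x. ennreal (norm (exp (- b * \<bar>x\<bar>))) \<partial>lborel) \<le> (\<integral>\<^sup>+x. ennreal (g x) + ennreal (g (- x)) \<partial>lborel)"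
    by (intro nn_integral_mono) (auto simp: g_def)
  also have "\<dots> = ennreal (1 / b) + ennreal (1 / b)"
    by (subst nn_integral_add) (auto simp: right left)
  finally show "(\<integral>\<^sup>+x. ennreal (norm (exp (- b * \<bar>x\<bar>))) \<partial>lborel) < \<infinity>"
    by (simp add: order_le_less_trans)
qed simp

lemma integrable_norm_Mpot:
  assumes \<psi>: "\<psi> \<in> borel_measurable borel" and a: "a > 0"
    and decay: "\<And>x. cmod (\<psi> x) \<le> C * exp (- a * \<bar>x\<bar>)"
  shows "integrable lborel (\<lambda>x. norm (Mpot \<epsilon> \<gamma> \<mu> \<nu> \<psi> x))"
proof -
  define K where "K = 3 * norm (N1 \<epsilon> \<gamma>) + 5 * C^2 * norm (N2 \<mu> \<nu>)"
  have bound: "norm (Mpot \<epsilon> \<gamma> \<mu> \<nu> \<psi> x) \<le> K * C^2 * exp (- (2 * a) * \<bar>x\<bar>)" for x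
  proof -
    let ?e = "exp (- a * \<bar>x\<bar>)"
    have "0 \<le> C * ?e"
      using decay[of x] norm_ge_zero order_trans by blast
    then have "0 \<le> C"
      by (simp add: zero_le_mult_iff)
    have r: "(cmod (\<psi> x))^2 \<le> (C * ?e)^2"
      using decay[of x] by (intro power_mono) auto
    have "?e^2 \<le> 1"
      using a by (simp add: power_le_one)
    then have "(C * ?e)^2 \<le> C^2"
      by (simp add: power_mult_distrib mult_left_le)
    with r have "3 * norm (N1 \<epsilon> \<gamma>) + 5 * (cmod (\<psi> x))^2 * norm (N2 \<mu> \<nu>) \<le> K"
      unfolding K_def by (intro add_left_mono mult_right_mono) auto
    then have "norm (Mpot \<epsilon> \<gamma> \<mu> \<nu> \<psi> x) \<le> K * (cmod (\<psi> x))^2"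
      by (rule order_trans[OF norm_Mpot_le mult_right_mono[OF _ zero_le_power2]])
    also have "\<dots> \<le> K * (C * ?e)^2"
      using r by (rule mult_left_mono) (simp add: K_def)
    also have "\<dots> = K * C^2 * exp (- (2 * a) * \<bar>x\<bar>)"
      by (simp add: power_mult_distrib power2_eq_square flip: exp_add)
    finally show ?thesis .
  qed
  have "integrable lborel (\<lambda>x. K * C^2 * exp (- (2 * a) * \<bar>x\<bar>))"
    using a by (intro integrable_mult_right integrable_exp_neg_abs) simp
  then show ?thesis
  proof (rule Bochner_Integration.integrable_bound)
    show "(\<lambda>x. norm (Mpot \<epsilon> \<gamma> \<mu> \<nu> \<psi> x)) \<in> borel_measurable lborel"
      using borel_measurable_Mpot[OF \<psi>] by measurable
    show "AE x in lborel. norm (norm (Mpot \<epsilon> \<gamma> \<mu> \<nu> \<psi> x)) \<le> norm (K * C^2 * exp (- (2 * a) * \<bar>x\<bar>))"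
      using order_trans[OF bound abs_ge_self] by simp
  qed
qed

section \<open>Hilbert--Schmidt integral operators\<close>

lemma (in pair_sigma_finite) integrable_product_mult:
  fixes f :: "'a \<Rightarrow> real" and g :: "'b \<Rightarrow> real"
  assumes f: "integrable M1 f" and g: "integrable M2 g"
  shows "integrable (M1 \<Otimes>\<^sub>M M2) (\<lambda>(x, y). f x * g y)"
proof (rule integrableI_bounded)
  have [measurable]: "f \<in> borel_measurable M1" "g \<in> borel_measurable M2"
    using f g by auto
  show "(\<lambda>(x, y). f x * g y) \<in> borel_measurable (M1 \<Otimes>\<^sub>M M2)"
    by measurable
  have "(\<integral>\<^sup>+p. ennreal (norm (case p of (x, y) \<Rightarrow> f x * g y)) \<partial>(M1 \<Otimes>\<^sub>M M2))
      = (\<integral>\<^sup>+x. \<integral>\<^sup>+y. ennreal (norm (f x)) * ennreal (norm (g y)) \<partial>M2 \<partial>M1)"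
    by (subst M2.nn_integral_fst[symmetric]) (auto simp: abs_mult ennreal_mult)
  also have "\<dots> = (\<integral>\<^sup>+x. ennreal (norm (f x)) \<partial>M1) * (\<integral>\<^sup>+y. ennreal (norm (g y)) \<partial>M2)"
    by (simp add: nn_integral_cmult nn_integral_multc)
  also have "\<dots> < \<infinity>"
    using f g by (simp add: integrable_iff_bounded ennreal_mult_less_top)
  finally show "(\<integral>\<^sup>+p. ennreal (norm (case p of (x, y) \<Rightarrow> f x * g y)) \<partial>(M1 \<Otimes>\<^sub>M M2)) < \<infinity>" .
qed

lemma HS_kernelI:
  assumes measurable: "(\<lambda>(x, y). k x y) \<in> borel_measurable (lborel \<Otimes>\<^sub>M lborel)"
    and f: "integrable lborel f" and g: "integrable lborel g"
    and bound: "\<And>x y. (norm (k x y))^2 \<le> f x * g y"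
  shows "HS_kernel k"
  unfolding HS_kernel_def
proof (intro conjI measurable)
  show "integrable (lborel \<Otimes>\<^sub>M lborel) (\<lambda>(x, y). (norm (k x y))^2)"
  proof (rule Bochner_Integration.integrable_bound[OF lborel_pair.integrable_product_mult[OF f g]])
    show "(\<lambda>(x, y). (norm (k x y))^2) \<in> borel_measurable (lborel \<Otimes>\<^sub>M lborel)"
      using measurable by measurable
    show "AE p in lborel \<Otimes>\<^sub>M lborel. norm ((\<lambda>(x, y). (norm (k x y))^2) p) \<le> norm ((\<lambda>(x, y). f x * g y) p)"
      using order_trans[OF bound abs_ge_self] by (intro AE_I2) (simp split: prod.split)
  qed
qed

section \<open>The Birman--Schwinger kernel\<close>

lemma BS_kernel_eq:
  assumes nondeg: "(D, \<beta>) \<noteq> (0, 0)" and lam_ness: "lam \<notin> sigma_ess D \<beta> \<delta> \<alpha>"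
  shows "BS_kernel D \<beta> \<delta> \<alpha> \<epsilon> \<gamma> \<mu> \<nu> \<psi> V lam x y =
           (if x \<ge> y then
              - (R_r \<epsilon> \<gamma> \<mu> \<nu> \<psi> x ** Qproj D \<beta> \<delta> \<alpha> lam
                 ** mexp ((x - y) *\<^sub>R A_inf D \<beta> \<delta> \<alpha> lam) ** Qproj D \<beta> \<delta> \<alpha> lam
                 ** R_l D \<beta> \<epsilon> \<gamma> \<mu> \<nu> \<psi> V y)
            else
              R_r \<epsilon> \<gamma> \<mu> \<nu> \<psi> x ** (mat 1 - Qproj D \<beta> \<delta> \<alpha> lam)
                 ** mexp ((x - y) *\<^sub>R A_inf D \<beta> \<delta> \<alpha> lam) ** (mat 1 - Qproj D \<beta> \<delta> \<alpha> lam)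
                 ** R_l D \<beta> \<epsilon> \<gamma> \<mu> \<nu> \<psi> V y)"
proof -
  let ?Q = "Qproj D \<beta> \<delta> \<alpha> lam" and ?E = "mexp ((x - y) *\<^sub>R A_inf D \<beta> \<delta> \<alpha> lam)"
  let ?Rr = "R_r \<epsilon> \<gamma> \<mu> \<nu> \<psi> x" and ?Rl = "R_l D \<beta> \<epsilon> \<gamma> \<mu> \<nu> \<psi> V y"
  have "?Q ** ?Q = ?Q" "?Q ** ?E = ?E ** ?Q"
    unfolding Qproj_def using stable_proj_mexp[OF hyperbolic_diagonalizable_A_inf[OF nondeg lam_ness]] by auto
  note sandwich = idempotent_commuting_sandwich[OF this]
  have "?Rr ** ?Q ** ?E ** ?Q ** ?Rl = ?Rr ** (?Q ** ?E ** ?Q) ** ?Rl"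
    "?Rr ** (mat 1 - ?Q) ** ?E ** (mat 1 - ?Q) ** ?Rl = ?Rr ** ((mat 1 - ?Q) ** ?E ** (mat 1 - ?Q)) ** ?Rl"
    by (simp_all add: matrix_mul_assoc)
  then show ?thesis
    by (simp add: BS_kernel_def G_A_def sandwich matrix_mul_uminus_left matrix_mul_uminus_right)
qed

lemma norm_R_r: "norm (R_r \<epsilon> \<gamma> \<mu> \<nu> \<psi> x) = norm (psd_sqrt (mabs (Mpot \<epsilon> \<gamma> \<mu> \<nu> \<psi> x)))"
  using norm_block4[of "psd_sqrt (mabs (Mpot \<epsilon> \<gamma> \<mu> \<nu> \<psi> x))" 0 0 0] by (simp add: R_r_def)

lemma norm_R_l_le:
  assumes "mat_adj (V y) ** V y = mat 1"
  shows "norm (R_l D \<beta> \<epsilon> \<gamma> \<mu> \<nu> \<psi> V y)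
           \<le> norm (matrix_inv (Bm D \<beta>)) * sqrt 2 * norm (psd_sqrt (mabs (Mpot \<epsilon> \<gamma> \<mu> \<nu> \<psi> y)))"
proof -
  let ?X = "matrix_inv (Bm D \<beta>) ** V y ** psd_sqrt (mabs (Mpot \<epsilon> \<gamma> \<mu> \<nu> \<psi> y))"
  have "sqrt 2 = norm (V y)"
    using norm_unitary[OF assms] by (intro real_sqrt_unique) simp_all
  moreover have "norm (R_l D \<beta> \<epsilon> \<gamma> \<mu> \<nu> \<psi> V y) = norm ?X"
    using norm_block4[of 0 0 "- ?X" 0] by (simp add: R_l_def)
  ultimately show ?thesis
    using norm_matrix_mult3_le by metis
qed

lemma norm_BS_kernel_le:
  assumes nondeg: "(D, \<beta>) \<noteq> (0, 0)" and lam_ness: "lam \<notin> sigma_ess D \<beta> \<delta> \<alpha>"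
    and V_unitary: "\<And>x. mat_adj (V x) ** V x = mat 1"
  shows "\<exists>K. \<forall>x y. (norm (BS_kernel D \<beta> \<delta> \<alpha> \<epsilon> \<gamma> \<mu> \<nu> \<psi> V lam x y))^2
                     \<le> K * norm (Mpot \<epsilon> \<gamma> \<mu> \<nu> \<psi> x) * norm (Mpot \<epsilon> \<gamma> \<mu> \<nu> \<psi> y)"
proof -
  obtain KG where KG: "\<And>t. norm (G_A D \<beta> \<delta> \<alpha> lam t) \<le> KG"
    using green_kernel_bounded[OF hyperbolic_diagonalizable_A_inf[OF nondeg lam_ness]]
    unfolding G_A_eq_green_kernel by blast
  then have "0 \<le> KG"
    using norm_ge_zero order_trans by blast
  let ?S = "\<lambda>x. psd_sqrt (mabs (Mpot \<epsilon> \<gamma> \<mu> \<nu> \<psi> x))" and ?c = "KG * norm (matrix_inv (Bm D \<beta>)) * sqrt 2"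
  have "(norm (BS_kernel D \<beta> \<delta> \<alpha> \<epsilon> \<gamma> \<mu> \<nu> \<psi> V lam x y))^2
      \<le> (8 * ?c^2) * norm (Mpot \<epsilon> \<gamma> \<mu> \<nu> \<psi> x) * norm (Mpot \<epsilon> \<gamma> \<mu> \<nu> \<psi> y)" for x y
  proof -
    have "norm (BS_kernel D \<beta> \<delta> \<alpha> \<epsilon> \<gamma> \<mu> \<nu> \<psi> V lam x y)
        \<le> norm (R_r \<epsilon> \<gamma> \<mu> \<nu> \<psi> x) * norm (G_A D \<beta> \<delta> \<alpha> lam (x - y)) * norm (R_l D \<beta> \<epsilon> \<gamma> \<mu> \<nu> \<psi> V y)"
      unfolding BS_kernel_def by (rule norm_matrix_mult3_le)
    also have "\<dots> \<le> norm (?S x) * KG * (norm (matrix_inv (Bm D \<beta>)) * sqrt 2 * norm (?S y))"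
      using norm_R_r norm_R_l_le[OF V_unitary] KG \<open>0 \<le> KG\<close> by (intro mult_mono) auto
    finally have "(norm (BS_kernel D \<beta> \<delta> \<alpha> \<epsilon> \<gamma> \<mu> \<nu> \<psi> V lam x y))^2 \<le> ?c^2 * (norm (?S x))^2 * (norm (?S y))^2"
      by (rule power_mono[THEN order_trans]) (simp_all add: power_mult_distrib mult_ac)
    also have "\<dots> \<le> ?c^2 * (2 * sqrt 2 * norm (Mpot \<epsilon> \<gamma> \<mu> \<nu> \<psi> x)) * (2 * sqrt 2 * norm (Mpot \<epsilon> \<gamma> \<mu> \<nu> \<psi> y))"
      by (intro mult_mono mult_left_mono norm_psd_sqrt_mabs_le) auto
    also have "\<dots> = (8 * ?c^2) * norm (Mpot \<epsilon> \<gamma> \<mu> \<nu> \<psi> x) * norm (Mpot \<epsilon> \<gamma> \<mu> \<nu> \<psi> y)"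
      by (simp add: power2_eq_square)
    finally show ?thesis .
  qed
  then show ?thesis
    by blast
qed

lemma borel_measurable_BS_kernel:
  assumes nondeg: "(D, \<beta>) \<noteq> (0, 0)" and lam_ness: "lam \<notin> sigma_ess D \<beta> \<delta> \<alpha>"
    and \<psi>: "\<psi> \<in> borel_measurable borel" and V: "V \<in> borel_measurable borel"
  shows "(\<lambda>(x, y). BS_kernel D \<beta> \<delta> \<alpha> \<epsilon> \<gamma> \<mu> \<nu> \<psi> V lam x y) \<in> borel_measurable (lborel \<Otimes>\<^sub>M lborel)"
proof -
  have [measurable]: "Mpot \<epsilon> \<gamma> \<mu> \<nu> \<psi> \<in> borel_measurable borel" "V \<in> borel_measurable borel"
    using borel_measurable_Mpot[OF \<psi>] V by auto
  have [measurable]: "G_A D \<beta> \<delta> \<alpha> lam \<in> borel_measurable borel"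
    unfolding G_A_eq_green_kernel
    by (rule borel_measurable_green_kernel[OF hyperbolic_diagonalizable_A_inf[OF nondeg lam_ness]])
  have [measurable]: "(\<lambda>x::real. matrix_inv (Bm D \<beta>)) \<in> borel_measurable borel"
    by simp
  have [measurable]: "R_r \<epsilon> \<gamma> \<mu> \<nu> \<psi> \<in> borel_measurable borel" "R_l D \<beta> \<epsilon> \<gamma> \<mu> \<nu> \<psi> V \<in> borel_measurable borel"
    unfolding R_r_def[abs_def] R_l_def[abs_def] by measurable
  show ?thesis
    unfolding BS_kernel_def by measurable
qed

theorem proposition6p2:
  fixes D \<beta> \<delta> \<alpha> \<epsilon> \<gamma> \<mu> \<nu> C a :: real
    and \<psi> \<psi>' \<psi>'' :: "real \<Rightarrow> complex"
    and V :: "real \<Rightarrow> complex^2^2"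
    and lam :: complex
  assumes beta_nonneg: "\<beta> \<ge> 0"
    and nondeg: "(D, \<beta>) \<noteq> (0, 0)"
    and deriv1: "\<And>x. (\<psi> has_vector_derivative \<psi>' x) (at x)"
    and deriv2: "\<And>x. (\<psi>' has_vector_derivative \<psi>'' x) (at x)"
    and pulse: "\<And>x. of_real \<alpha> * \<psi> x + of_real (D/2) * \<psi>'' x
                    + of_real \<gamma> * (cmod (\<psi> x))^2 * \<psi> x + of_real \<nu> * (cmod (\<psi> x))^4 * \<psi> x
                  = \<i> * of_real \<delta> * \<psi> x + \<i> * of_real \<epsilon> * (cmod (\<psi> x))^2 * \<psi> x
                    + \<i> * of_real \<beta> * \<psi>'' x + \<i> * of_real \<mu> * (cmod (\<psi> x))^4 * \<psi> x"
    and C_pos: "C > 0" and a_pos: "a > 0"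
    and decay: "\<And>x. cmod (\<psi> x) \<le> C * exp (- a * \<bar>x\<bar>)"
    and polar: "\<And>x. Mpot \<epsilon> \<gamma> \<mu> \<nu> \<psi> x = V x ** mabs (Mpot \<epsilon> \<gamma> \<mu> \<nu> \<psi> x)"
    and V_unitary: "\<And>x. mat_adj (V x) ** V x = mat 1"
    and V_meas: "V \<in> borel_measurable lborel"
    and lam_ness: "lam \<notin> sigma_ess D \<beta> \<delta> \<alpha>"
  shows "HS_integral_operator (BS_op D \<beta> \<delta> \<alpha> \<epsilon> \<gamma> \<mu> \<nu> \<psi> V lam)
           (BS_kernel D \<beta> \<delta> \<alpha> \<epsilon> \<gamma> \<mu> \<nu> \<psi> V lam)
       \<and> (\<forall>x y. BS_kernel D \<beta> \<delta> \<alpha> \<epsilon> \<gamma> \<mu> \<nu> \<psi> V lam x y =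
           (if x \<ge> y then
              - (R_r \<epsilon> \<gamma> \<mu> \<nu> \<psi> x ** Qproj D \<beta> \<delta> \<alpha> lam
                 ** mexp ((x - y) *\<^sub>R A_inf D \<beta> \<delta> \<alpha> lam) ** Qproj D \<beta> \<delta> \<alpha> lam
                 ** R_l D \<beta> \<epsilon> \<gamma> \<mu> \<nu> \<psi> V y)
            else
              R_r \<epsilon> \<gamma> \<mu> \<nu> \<psi> x ** (mat 1 - Qproj D \<beta> \<delta> \<alpha> lam)
                 ** mexp ((x - y) *\<^sub>R A_inf D \<beta> \<delta> \<alpha> lam) ** (mat 1 - Qproj D \<beta> \<delta> \<alpha> lam)
                 ** R_l D \<beta> \<epsilon> \<gamma> \<mu> \<nu> \<psi> V y))"
proof -
  have "continuous_on UNIV \<psi>"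
    by (intro continuous_at_imp_continuous_on ballI has_vector_derivative_continuous[OF deriv1])
  then have \<psi>_meas: "\<psi> \<in> borel_measurable borel"
    by (rule borel_measurable_continuous_onI)
  from norm_BS_kernel_le[where V = V, OF nondeg lam_ness V_unitary] obtain K where
    K: "\<And>x y. (norm (BS_kernel D \<beta> \<delta> \<alpha> \<epsilon> \<gamma> \<mu> \<nu> \<psi> V lam x y))^2
      \<le> K * norm (Mpot \<epsilon> \<gamma> \<mu> \<nu> \<psi> x) * norm (Mpot \<epsilon> \<gamma> \<mu> \<nu> \<psi> y)"
    by blast
  have M_int: "integrable lborel (\<lambda>x. norm (Mpot \<epsilon> \<gamma> \<mu> \<nu> \<psi> x))"
    using \<psi>_meas a_pos decay by (rule integrable_norm_Mpot)
  have "HS_kernel (BS_kernel D \<beta> \<delta> \<alpha> \<epsilon> \<gamma> \<mu> \<nu> \<psi> V lam)"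
  proof (rule HS_kernelI[OF _ integrable_mult_right[OF M_int] M_int])
    show "(\<lambda>(x, y). BS_kernel D \<beta> \<delta> \<alpha> \<epsilon> \<gamma> \<mu> \<nu> \<psi> V lam x y) \<in> borel_measurable (lborel \<Otimes>\<^sub>M lborel)"
      using V_meas by (intro borel_measurable_BS_kernel[OF nondeg lam_ness \<psi>_meas]) simp
  qed (rule K)
  then show ?thesis
    unfolding HS_integral_operator_def BS_op_def using BS_kernel_eq[OF nondeg lam_ness] by simp
qed

end
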